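(* Let $m,\mathfrak{m}\in\mathbb{N}$, let $f\in L^2([0,1];\mathbb{C}^m)$ be $\mathfrak{m}$-Fourier bandlimited, let $0<\alpha<\beta<1$, let $N>\mathfrak{m}$ be an integer, and set $$\sigma=\frac{(N-\mathfrak{m})^{\beta}}{\sqrt{6}\,\pi},\qquad r=\frac{3\pi}{(N-\mathfrak{m})^{\alpha}}.$$ Define $$\mathcal{R}_{r,\sigma}f(x)=\sum_{j=0}^{2N-1} f(j/2N)\,s_N(x-j/2N)\,\mathcal{G}_{r,\sigma}(x-j/2N),\qquad x\in[0,1].$$ Then there exists $C>0$ such that, for all sufficiently large $N$, $$\|f-\mathcal{R}_{r,\sigma}f\|_{L^2([0,1];\mathbb{C}^m)}\le C\,\widetilde{\mathcal{E}}(N,\mathfrak{m},\alpha,\beta)\,\|f\|_{L^2([0,1];\mathbb{C}^m)},$$ where $$\widetilde{\mathcal{E}}(N,\mathfrak{m},\alpha,\beta)=e^{-3\pi^2(N-\mathfrak{m})^{2(1-\beta)}}\max\{1,(N-\mathfrak{m})^{2\beta-1}\}+(N-\mathfrak{m})^{\alpha+\beta}e^{-3\pi^2(N-\mathfrak{m})^{2(\beta-\alpha)}}.$$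
   Context: For $N\in\mathbb{N}$, $B_N=\{-N,-N+1,\dots,N-1\}\subset\mathbb{Z}$. Fourier coefficients of $f\in L^2([0,1];\mathbb{C}^m)$ are $\hat f(k)=\int_0^1 f(x)e^{-i2\pi kx}\,dx\in\mathbb{C}^m$. The function $f$ is $\mathfrak{m}$-Fourier bandlimited if $\hat f(k)=0$ for all $k\notin B_{\mathfrak{m}}$; such $f$ is identified with its continuous representative $\sum_{k\in B_{\mathfrak{m}}}\hat f(k)e^{i2\pi kx}$, regarded as a $1$-periodic function. The sampling function is $s_N(x)=\frac{1}{2N}\sum_{k=-N}^{N-1}e^{i2\pi kx}$. For $\sigma>0$, $\mathcal{G}_\sigma(x)=c(\sigma)\sum_{n\in\mathbb{Z}}e^{-n^2\sigma^{-2}/2}e^{i2\pi nx}$, where $c(\sigma)>0$ is the constant making $\mathcal{G}_\sigma(0)=1$. For $r\in(0,1/2)$, $\mathcal{G}_{r,\sigma}$ is the $1$-periodic function on $\mathbb{R}$ equal to $\mathcal{G}_\sigma(x)$ if $|x-k|\le r$ for some $k\in\mathbb{Z}$ and equal to $0$ otherwise. Arguments $x-j/2N$ are interpreted modulo $1$. *)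

theory Defs
  imports "HOL-Analysis.Analysis"
begin

text \<open>Bandlimited vector-valued functions on the circle, identified with their
continuous representative: f x = sum over k in B_M of fhat k * e^(i 2 pi k x).\<close>
definition bandlimited :: "nat \<Rightarrow> (real \<Rightarrow> complex ^ 'm) \<Rightarrow> bool" where
  "bandlimited M f \<longleftrightarrow> (\<exists>c :: int \<Rightarrow> complex ^ 'm.
     \<forall>x. f x = (\<Sum>k\<in>{- int M..int M - 1}. exp (\<i> * of_real (2 * pi * of_int k * x)) *s c k))"

definition sampling_fun :: "nat \<Rightarrow> real \<Rightarrow> complex" where
  "sampling_fun N x = (1 / (2 * of_nat N)) *
     (\<Sum>k\<in>{- int N..int N - 1}. exp (\<i> * of_real (2 * pi * of_int k * x)))"

definition gauss_series :: "real \<Rightarrow> real \<Rightarrow> complex" where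
  "gauss_series \<sigma> x = (\<Sum>\<^sub>\<infinity>n::int. of_real (exp (- (of_int n)\<^sup>2 / \<sigma>\<^sup>2 / 2))
                                  * exp (\<i> * of_real (2 * pi * of_int n * x)))"

definition periodic_gauss :: "real \<Rightarrow> real \<Rightarrow> complex" where
  "periodic_gauss \<sigma> x = gauss_series \<sigma> x / gauss_series \<sigma> 0"

definition trunc_gauss :: "real \<Rightarrow> real \<Rightarrow> real \<Rightarrow> complex" where
  "trunc_gauss r \<sigma> x = (if \<exists>k::int. \<bar>x - of_int k\<bar> \<le> r then periodic_gauss \<sigma> x else 0)"

definition reconstr :: "nat \<Rightarrow> real \<Rightarrow> real \<Rightarrow> (real \<Rightarrow> complex ^ 'm) \<Rightarrow> real \<Rightarrow> complex ^ 'm" where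
  "reconstr N r \<sigma> f x = (\<Sum>j<2 * N.
      (sampling_fun N (x - real j / (2 * real N)) * trunc_gauss r \<sigma> (x - real j / (2 * real N)))
        *s f (real j / (2 * real N)))"

definition L2norm01 :: "(real \<Rightarrow> complex ^ 'm) \<Rightarrow> real" where
  "L2norm01 g = sqrt (integral {0..1} (\<lambda>x. (norm (g x))\<^sup>2))"

definition err_tilde :: "nat \<Rightarrow> nat \<Rightarrow> real \<Rightarrow> real \<Rightarrow> real" where
  "err_tilde N M \<alpha> \<beta> =
     exp (- 3 * pi\<^sup>2 * (real N - real M) powr (2 * (1 - \<beta>))) * max 1 ((real N - real M) powr (2 * \<beta> - 1))
     + (real N - real M) powr (\<alpha> + \<beta>) * exp (- 3 * pi\<^sup>2 * (real N - real M) powr (2 * (\<beta> - \<alpha>)))"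

end

theory Submission
  imports Defs "HOL-Probability.Characteristic_Functions" "HOL-Library.Periodic_Fun"
begin

text \<open>
  Write \<open>e(t) = exp (2\<pi>it)\<close>. The reconstruction is linear and \<open>f\<close> is a combination of the
  modes \<open>e(l\<cdot>)\<close>, \<open>l \<in> B\<^sub>M\<close>, so it suffices to reconstruct a single mode \<open>e(kx)\<close>.
  For the untruncated Gaussian \<open>G\<^sub>\<sigma> = (\<Sum>\<^sub>n q\<^sub>n e(n\<cdot>)) / (\<Sum>\<^sub>n q\<^sub>n)\<close>, \<open>q\<^sub>n = exp (-n\<^sup>2/(2\<sigma>\<^sup>2))\<close>,
  the sampling sum turns each product \<open>e(k\<cdot>) e(n\<cdot>)\<close> into an aliased exponential of modulus one,
  which is exactly \<open>e(kx)\<close> as long as \<open>k - n \<in> B\<^sub>N\<close>, in particular for \<open>|n| < N - M\<close>; so the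
  error is at most twice the Gaussian tail \<open>\<Sum>\<^bsub>|n| \<ge> N - M\<^esub> q\<^sub>n\<close>. Truncating \<open>G\<^sub>\<sigma>\<close> to the
  \<open>r\<close>-neighbourhood of the integers costs at most \<open>2N\<close> times the product of the sizes of
  \<open>s\<^sub>N\<close> and \<open>G\<^sub>\<sigma>\<close> at distance \<open>> r\<close> from \<open>\<int>\<close>: the Dirichlet kernel gives
  \<open>|s\<^sub>N| \<le> 1/(2N sin \<pi>r)\<close>, and by Poisson summation \<open>G\<^sub>\<sigma>\<close> is proportional to
  \<open>\<Sum>\<^sub>k exp (-2\<pi>\<^sup>2\<sigma>\<^sup>2 (y + k)\<^sup>2)\<close>, which is of size \<open>exp (-2\<pi>\<^sup>2\<sigma>\<^sup>2r\<^sup>2)\<close> there.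
  Poisson summation follows by comparing Fourier coefficients, because a continuous periodic
  function with vanishing Fourier coefficients is zero (Stone-Weierstrass on the circle).
  Finally each coefficient of \<open>f\<close> is bounded by its \<open>L\<^sup>2\<close> norm, and on \<open>[0,1]\<close> the
  \<open>L\<^sup>2\<close> norm is bounded by the sup norm.
\<close>

section \<open>Exponentials on the circle\<close>

definition cis2pi :: "real \<Rightarrow> complex" where
  "cis2pi t = cis (2 * pi * t)"

lemma exp_eq_cis2pi: "exp (\<i> * complex_of_real (2 * pi * of_int k * x)) = cis2pi (of_int k * x)"
  by (simp add: cis2pi_def cis_conv_exp mult.assoc)

lemma norm_cis2pi [simp]: "norm (cis2pi t) = 1"
  by (simp add: cis2pi_def)

lemma cis2pi_0 [simp]: "cis2pi 0 = 1"
  by (simp add: cis2pi_def)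

lemma cis2pi_add: "cis2pi (s + t) = cis2pi s * cis2pi t"
  by (simp add: cis2pi_def cis_mult distrib_left)

lemma cis2pi_minus: "cis2pi (- t) = cnj (cis2pi t)"
  by (simp add: cis2pi_def cis_cnj)

lemma cis2pi_power: "cis2pi t ^ n = cis2pi (real n * t)"
  by (induction n) (simp_all add: distrib_right cis2pi_add)

lemma cis2pi_of_int [simp]: "cis2pi (of_int k) = 1"
  unfolding cis2pi_def by (rule cis_multiple_2pi) simp

lemma cis2pi_plus_of_int: "cis2pi (t + of_int k) = cis2pi t"
  by (simp add: cis2pi_add)

lemma cis2pi_eq_1_iff: "cis2pi t = 1 \<longleftrightarrow> t \<in> \<int>"
proof
  assume "cis2pi t = 1"
  then obtain n :: int where "2 * pi * t = of_int (2 * n) * pi"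
    by (auto simp: cis2pi_def cis_conv_exp exp_eq_1)
  then have "t = of_int n" by simp
  then show "t \<in> \<int>" by simp
qed (auto elim: Ints_cases)

lemma continuous_on_cis2pi [continuous_intros]:
  "continuous_on A f \<Longrightarrow> continuous_on A (\<lambda>x. cis2pi (f x))"
  unfolding cis2pi_def by (intro continuous_intros)

lemma continuous_cis2pi [continuous_intros]: "continuous F f \<Longrightarrow> continuous F (\<lambda>x. cis2pi (f x))"
  unfolding cis2pi_def cis_conv_exp by (intro continuous_intros)

lemma has_vector_derivative_cis2pi:
  "((\<lambda>x. cis2pi (c * x)) has_vector_derivative
      (complex_of_real (2 * pi * c) * \<i> * cis2pi (c * x))) (at x within S)"
  unfolding cis2pi_def cis_conv_exp
  by (auto intro!: derivative_eq_intros simp: has_vector_derivative_complex_iff Re_exp Im_exp algebra_simps)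

lemma integral_cis2pi_int:
  "integral {0..1} (\<lambda>x. cis2pi (of_int k * x)) = (if k = 0 then 1 else 0)"
proof (cases "k = 0")
  case False
  define c where "c = complex_of_real (2 * pi * of_int k) * \<i>"
  have "c \<noteq> 0" using False by (simp add: c_def)
  have "((\<lambda>x. cis2pi (of_int k * x)) has_integral
          (cis2pi (of_int k * 1) / c - cis2pi (of_int k * 0) / c)) {0..1}"
  proof (rule fundamental_theorem_of_calculus)
    fix x
    have "((\<lambda>x. cis2pi (of_int k * x) / c) has_vector_derivative c * cis2pi (of_int k * x) / c)
            (at x within {0..1})"
      unfolding c_def by (intro has_vector_derivative_divide has_vector_derivative_cis2pi)
    then show "((\<lambda>x. cis2pi (of_int k * x) / c) has_vector_derivative cis2pi (of_int k * x))
            (at x within {0..1})"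
      using \<open>c \<noteq> 0\<close> by simp
  qed simp
  then show ?thesis using False by (simp add: integral_unique)
qed simp

lemma norm_1_minus_cis2pi: "norm (1 - cis2pi y) = 2 * \<bar>sin (pi * y)\<bar>"
proof -
  have "(norm (1 - cis2pi y))\<^sup>2 = (1 - cos (2 * pi * y))\<^sup>2 + (sin (2 * pi * y))\<^sup>2"
    by (simp add: cis2pi_def cmod_power2)
  also have "\<dots> = 2 - 2 * cos (2 * (pi * y))"
    using sin_cos_squared_add[of "2 * pi * y"] by (simp add: power2_eq_square algebra_simps)
  also have "\<dots> = (2 * \<bar>sin (pi * y)\<bar>)\<^sup>2"
    unfolding cos_double_sin by (simp add: power2_eq_square)
  finally show ?thesis
    by (subst (asm) power2_eq_iff_nonneg) auto
qed

section \<open>Series over the integers and integrals over the line\<close>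

lemma has_sum_int_split:
  fixes f :: "int \<Rightarrow> 'a::topological_comm_monoid_add"
  assumes "((\<lambda>n::nat. f (int n)) has_sum A) UNIV"
      and "((\<lambda>n::nat. f (- int n - 1)) has_sum B) UNIV"
  shows "(f has_sum (A + B)) UNIV"
proof -
  have inj: "inj (\<lambda>n::nat. - int n - 1)" by (auto intro: injI)
  have pos: "(f has_sum A) (range int)"
    using assms(1) by (subst has_sum_reindex) (auto simp: o_def)
  have neg: "(f has_sum B) (range (\<lambda>n::nat. - int n - 1))"
    using assms(2) by (subst has_sum_reindex[OF inj]) (auto simp: o_def)
  have cover: "range int \<union> range (\<lambda>n::nat. - int n - 1) = UNIV"
  proof -
    have "z \<in> range int \<union> range (\<lambda>n::nat. - int n - 1)" for z :: int
    proof (cases "z \<ge> 0")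
      case True
      then show ?thesis by (auto intro!: image_eqI[of z int "nat z"])
    next
      case False
      then show ?thesis by (auto intro!: image_eqI[of z "\<lambda>n::nat. - int n - 1" "nat (- z - 1)"])
    qed
    then show ?thesis by blast
  qed
  have "range int \<inter> range (\<lambda>n::nat. - int n - 1) = {}"
    by auto
  with has_sum_Un_disjoint[OF pos neg] cover show ?thesis
    by simp
qed

lemma has_sum_geometric_int:
  fixes \<rho> :: real
  assumes "0 \<le> \<rho>" "\<rho> < 1"
  shows "((\<lambda>n::int. \<rho> ^ nat \<bar>n - c\<bar>) has_sum ((1 + \<rho>) / (1 - \<rho>))) UNIV"
proof -
  have geo: "((\<lambda>n. \<rho> ^ n) has_sum (1 / (1 - \<rho>))) UNIV"
    using geometric_sums[of \<rho>] assms by (intro sums_nonneg_imp_has_sum) auto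
  have "((\<lambda>n::int. \<rho> ^ nat \<bar>n\<bar>) has_sum (1 / (1 - \<rho>) + \<rho> / (1 - \<rho>))) UNIV"
  proof (rule has_sum_int_split)
    show "((\<lambda>n::nat. \<rho> ^ nat \<bar>int n\<bar>) has_sum 1 / (1 - \<rho>)) UNIV"
      using geo by simp
    have "((\<lambda>n. \<rho> * \<rho> ^ n) has_sum (\<rho> * (1 / (1 - \<rho>)))) UNIV"
      by (rule has_sum_cmult_right[OF geo])
    moreover have "\<rho> ^ nat \<bar>- int n - 1\<bar> = \<rho> * \<rho> ^ n" for n
      by (simp add: nat_add_distrib)
    ultimately show "((\<lambda>n::nat. \<rho> ^ nat \<bar>- int n - 1\<bar>) has_sum \<rho> / (1 - \<rho>)) UNIV"
      by simp
  qed
  then have "((\<lambda>n::int. \<rho> ^ nat \<bar>n\<bar>) has_sum ((1 + \<rho>) / (1 - \<rho>))) UNIV"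
    by (simp add: add_divide_distrib)
  moreover have "bij_betw (\<lambda>n. n - c) UNIV UNIV"
    by (rule bij_betwI[of _ _ _ "\<lambda>n. n + c"]) auto
  ultimately show ?thesis
    using has_sum_reindex_bij_betw[of "\<lambda>n. n - c" UNIV UNIV "\<lambda>n. \<rho> ^ nat \<bar>n\<bar>"] by simp
qed

lemma summable_on_exp_neg_sq_int:
  fixes b :: real
  assumes "b > 0"
  shows "(\<lambda>n::int. exp (- b * (of_int n)\<^sup>2)) summable_on UNIV"
proof (rule summable_on_comparison_test)
  show "(\<lambda>n::int. exp (- b) ^ nat \<bar>n - 0\<bar>) summable_on UNIV"
    using has_sum_geometric_int[of "exp (- b)" 0] assms by (auto dest: has_sum_imp_summable)
  fix n :: int
  have "\<bar>n\<bar> \<le> n\<^sup>2"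
    using mult_left_mono[of 1 "\<bar>n\<bar>" "\<bar>n\<bar>"]
    by (cases "n = 0") (auto simp: power2_eq_square abs_mult_self_eq)
  then have "real (nat \<bar>n\<bar>) \<le> (of_int n)\<^sup>2"
    by (metis of_int_le_iff of_int_of_nat_eq of_int_power nat_0_le abs_ge_zero)
  then have "exp (- b * (of_int n)\<^sup>2) \<le> exp (- b * real (nat \<bar>n\<bar>))"
    using assms by simp
  then show "exp (- b * (of_int n)\<^sup>2) \<le> exp (- b) ^ nat \<bar>n - 0\<bar>"
    by (simp add: exp_of_nat_mult[symmetric] mult.commute)
qed auto

lemma has_sum_integral_Weierstrass:
  fixes f :: "'i \<Rightarrow> real \<Rightarrow> 'c::banach"
  assumes bound: "\<And>i x. i \<in> X \<Longrightarrow> x \<in> {a..b} \<Longrightarrow> norm (f i x) \<le> B i"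
      and summable: "B summable_on X"
      and cont: "\<And>i. continuous_on {a..b} (f i)"
  shows "((\<lambda>i. integral {a..b} (f i)) has_sum integral {a..b} (\<lambda>x. \<Sum>\<^sub>\<infinity>i\<in>X. f i x)) X"
    and "continuous_on {a..b} (\<lambda>x. \<Sum>\<^sub>\<infinity>i\<in>X. f i x)"
proof -
  have lim: "uniform_limit {a..b} (\<lambda>F x. \<Sum>i\<in>F. f i x) (\<lambda>x. \<Sum>\<^sub>\<infinity>i\<in>X. f i x)
               (finite_subsets_at_top X)"
    by (rule Weierstrass_m_test_general[OF bound summable])
  have cont_sum: "continuous_on {a..b} (\<lambda>x. \<Sum>i\<in>F. f i x)" for F
    by (intro continuous_intros cont)
  obtain I J where I: "\<And>F. ((\<lambda>x. \<Sum>i\<in>F. f i x) has_integral I F) {a..b}"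
    and J: "((\<lambda>x. \<Sum>\<^sub>\<infinity>i\<in>X. f i x) has_integral J) {a..b}"
    and IJ: "(I \<longlongrightarrow> J) (finite_subsets_at_top X)"
    using uniform_limit_integral[OF lim cont_sum] by auto
  have "I F = (\<Sum>i\<in>F. integral {a..b} (f i))" for F
  proof -
    have "I F = integral {a..b} (\<lambda>x. \<Sum>i\<in>F. f i x)"
      using I[of F] by (simp add: integral_unique)
    also have "\<dots> = (\<Sum>i\<in>F. integral {a..b} (f i))"
      by (cases "finite F") (auto intro: integral_sum integrable_continuous_real cont)
    finally show ?thesis .
  qed
  then have "I = (\<lambda>F. \<Sum>i\<in>F. integral {a..b} (f i))" ..
  then show "((\<lambda>i. integral {a..b} (f i)) has_sum integral {a..b} (\<lambda>x. \<Sum>\<^sub>\<infinity>i\<in>X. f i x)) X"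
    using IJ J unfolding has_sum_def by (simp add: integral_unique)
  show "continuous_on {a..b} (\<lambda>x. \<Sum>\<^sub>\<infinity>i\<in>X. f i x)"
    by (rule uniform_limit_theorem[OF _ lim]) (auto intro: cont_sum always_eventually)
qed

lemma gauss_fourier_transform:
  fixes a m :: real
  assumes a: "a > 0"
  shows "integrable lborel (\<lambda>u. complex_of_real (exp (- a * u\<^sup>2)) * cis2pi (m * u))"
    and "(LINT u|lborel. complex_of_real (exp (- a * u\<^sup>2)) * cis2pi (m * u))
           = complex_of_real (sqrt (pi / a) * exp (- pi\<^sup>2 * m\<^sup>2 / a))"
proof -
  define b where "b = sqrt (2 * a)"
  have b: "b > 0" "b\<^sup>2 = 2 * a" using a by (auto simp: b_def)
  define t where "t = 2 * pi * m / b"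
  define F where "F = (\<lambda>x. std_normal_density x *\<^sub>R iexp (t * x))"
  have F_integrable: "integrable lborel F"
    unfolding F_def
    by (rule Bochner_Integration.integrable_bound[OF integrable_normal_density[of 1 0]])
       (auto simp: norm_exp_i_times normal_density_nonneg)
  have "char std_normal_distribution t = integral\<^sup>L lborel F"
    unfolding char_def F_def by (subst integral_density) (auto simp: normal_density_nonneg)
  then have F_integral: "integral\<^sup>L lborel F = complex_of_real (exp (- (t\<^sup>2) / 2))"
    by (simp add: char_std_normal_distribution)
  have F_scaled: "F (b * u)
      = complex_of_real (1 / sqrt (2 * pi)) * (complex_of_real (exp (- a * u\<^sup>2)) * cis2pi (m * u))" for u
  proof -
    have "std_normal_density (b * u) = (1 / sqrt (2 * pi)) * exp (- a * u\<^sup>2)"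
      unfolding std_normal_density_def using b by (simp add: power_mult_distrib)
    moreover have "iexp (t * (b * u)) = cis2pi (m * u)"
      using b by (simp add: t_def cis2pi_def cis_conv_exp field_simps)
    ultimately show ?thesis by (simp add: F_def scaleR_conv_of_real)
  qed
  have "integrable lborel (\<lambda>u. F (b * u))"
    using F_integrable lborel_integrable_real_affine_iff[of b F 0] b by simp
  then have "integrable lborel (\<lambda>u. complex_of_real (sqrt (2 * pi)) * F (b * u))"
    by (rule integrable_mult_right)
  then show "integrable lborel (\<lambda>u. complex_of_real (exp (- a * u\<^sup>2)) * cis2pi (m * u))"
    by (simp add: F_scaled)
  have "integral\<^sup>L lborel F = b *\<^sub>R integral\<^sup>L lborel (\<lambda>u. F (b * u))"
    using lborel_integral_real_affine[of b F 0] b by simp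
  also have "\<dots> = complex_of_real (b / sqrt (2 * pi))
                 * (LINT u|lborel. complex_of_real (exp (- a * u\<^sup>2)) * cis2pi (m * u))"
    by (simp add: F_scaled scaleR_conv_of_real)
  finally have "(LINT u|lborel. complex_of_real (exp (- a * u\<^sup>2)) * cis2pi (m * u))
      = complex_of_real (sqrt (2 * pi) / b * exp (- (t\<^sup>2) / 2))"
    using b unfolding F_integral by (simp add: field_simps)
  moreover have "sqrt (2 * pi) / b = sqrt (pi / a)"
    using a by (simp add: b_def real_sqrt_divide[symmetric])
  moreover have "t\<^sup>2 / 2 = pi\<^sup>2 * m\<^sup>2 / a"
    using a b by (simp add: t_def power_divide power_mult_distrib field_simps)
  ultimately show "(LINT u|lborel. complex_of_real (exp (- a * u\<^sup>2)) * cis2pi (m * u))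
           = complex_of_real (sqrt (pi / a) * exp (- pi\<^sup>2 * m\<^sup>2 / a))"
    by simp
qed

lemma lborel_integral_eq_sum_unit_translates:
  fixes g :: "real \<Rightarrow> complex"
  assumes integrable: "integrable lborel g" and cont: "continuous_on UNIV g"
    and sum: "((\<lambda>k::int. integral {0..1} (\<lambda>y. g (y + of_int k))) has_sum S) UNIV"
  shows "(LINT u|lborel. g u) = S"
proof -
  define A where "A = (\<lambda>i. {real_of_int (int_decode i)..<real_of_int (int_decode i) + 1})"
  have A_iff: "x \<in> A i \<longleftrightarrow> \<lfloor>x\<rfloor> = int_decode i" for x i
    by (simp add: A_def floor_eq_iff)
  have "x \<in> A (int_encode \<lfloor>x\<rfloor>)" for x
    by (simp add: A_iff int_encode_inverse)
  then have A_cover: "(\<Union>i. A i) = UNIV"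
    by blast
  have A_integral: "(LINT x:A i|lborel. g x) = integral {0..1} (\<lambda>y. g (y + of_int (int_decode i)))" for i
  proof -
    define k where "k = int_decode i"
    have g_measurable: "g \<in> borel_measurable lborel"
      using borel_measurable_continuous_on[OF cont, of "\<lambda>x. x" lborel] by simp
    have "(LINT x:A i|lborel. g x) = (LINT x:{of_int k..of_int k + 1}|lborel. g x)"
      unfolding A_def k_def[symmetric]
    proof (rule set_integral_cong_set)
      show "AE x in lborel. (x \<in> {of_int k..of_int k + 1}) = (x \<in> {real_of_int k..<of_int k + 1})"
        by (rule eventually_mono[OF AE_lborel_singleton[of "of_int k + 1 :: real"]]) auto
    qed (use g_measurable in \<open>unfold set_borel_measurable_def, measurable\<close>)+
    also have "\<dots> = integral {of_int k..of_int k + 1} g"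
      by (rule set_borel_integral_eq_integral(2)[OF borel_integrable_atLeastAtMost'])
         (rule continuous_on_subset[OF cont], auto)
    also have "\<dots> = integral {0..1} (\<lambda>y. g (y + of_int k))"
      using integral_shift_Icc_real[of 0 1 g "of_int k"] by (simp add: o_def add.commute)
    finally show ?thesis unfolding k_def .
  qed
  have "(LINT x:(\<Union>i. A i)|lborel. g x) = (\<Sum>i. (LINT x:A i|lborel. g x))"
  proof (rule lebesgue_integral_countable_add)
    show "A i \<in> sets lborel" for i
      by (simp add: A_def)
    show "A i \<inter> A j = {}" if "i \<noteq> j" for i j
      using that by (auto simp: A_iff int_decode_eq)
    show "set_integrable lborel (\<Union>i. A i) g"
      unfolding A_cover set_integrable_def using integrable by simp
  qed
  also have "\<dots> = S"
  proof (rule sums_unique[symmetric], rule has_sum_imp_sums)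
    show "((\<lambda>i. LINT x:A i|lborel. g x) has_sum S) UNIV"
      using sum has_sum_reindex_bij_betw[of int_decode UNIV UNIV
          "\<lambda>k. integral {0..1} (\<lambda>y. g (y + of_int k))" S] bij_int_decode
      by (simp add: A_integral bij_betw_def)
  qed
  finally show ?thesis unfolding A_cover set_lebesgue_integral_def by simp
qed

section \<open>Uniqueness of Fourier coefficients\<close>

lemma cis2pi_eq_cis2pi_iff: "cis2pi s = cis2pi t \<longleftrightarrow> s - t \<in> \<int>"
  by (simp add: cis2pi_eq_1_iff[symmetric] cis2pi_def cis_divide[symmetric] right_diff_distrib)

lemma periodic_eq_if_diff_Ints:
  assumes "\<And>x. H (x + 1) = H x" and "s - t \<in> \<int>"
  shows "H s = H t"
proof -
  interpret periodic_fun_simple' H by standard (fact assms(1))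
  from assms(2) obtain n where "s = t + of_int n"
    by (metis Ints_cases add_diff_cancel_left' diff_add_cancel)
  then show ?thesis by (simp add: plus_of_int)
qed

text \<open>Trigonometric polynomials are represented by lists of (coefficient, frequency) pairs,
  so that sums and products are again lists.\<close>

definition trig_poly :: "(complex \<times> int) list \<Rightarrow> real \<Rightarrow> complex" where
  "trig_poly cs y = (\<Sum>p\<leftarrow>cs. fst p * cis2pi (of_int (snd p) * y))"

lemma trig_poly_Nil [simp]: "trig_poly [] y = 0"
  by (simp add: trig_poly_def)

lemma trig_poly_Cons [simp]: "trig_poly (p # cs) y = fst p * cis2pi (of_int (snd p) * y) + trig_poly cs y"
  by (simp add: trig_poly_def)

lemma trig_poly_append: "trig_poly (cs @ ds) y = trig_poly cs y + trig_poly ds y"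
  by (simp add: trig_poly_def)

lemma trig_poly_mult:
  "trig_poly cs y * trig_poly ds y = trig_poly [(fst p * fst q, snd p + snd q). p \<leftarrow> cs, q \<leftarrow> ds] y"
proof (induction cs)
  case (Cons p cs)
  have "fst p * cis2pi (of_int (snd p) * y) * trig_poly ds y
        = trig_poly (map (\<lambda>q. (fst p * fst q, snd p + snd q)) ds) y"
    by (induction ds) (simp_all add: algebra_simps cis2pi_add)
  with Cons show ?case
    by (simp add: trig_poly_append distrib_right)
qed simp

lemma continuous_on_trig_poly [continuous_intros]: "continuous_on A (trig_poly cs)"
  unfolding trig_poly_def by (induction cs) (auto intro!: continuous_intros)

lemma real_polynomial_function_on_circle:
  assumes "real_polynomial_function g"
  shows "\<exists>cs. \<forall>y. complex_of_real (g (cis2pi y)) = trig_poly cs y"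
  using assms
proof (induction rule: real_polynomial_function.induct)
  case (linear g)
  interpret bounded_linear g by fact
  define a b where "a = complex_of_real (g 1)" and "b = complex_of_real (g \<i>)"
  have decomp: "complex_of_real (g z) = complex_of_real (Re z) * a + complex_of_real (Im z) * b" for z
  proof -
    have "z = Re z *\<^sub>R 1 + Im z *\<^sub>R \<i>" by (simp add: complex_eq_iff)
    then have "g z = g (Re z *\<^sub>R 1 + Im z *\<^sub>R \<i>)" by (rule arg_cong)
    then show ?thesis by (simp add: a_def b_def add scaleR)
  qed
  have re: "complex_of_real (Re (cis2pi y)) = (cis2pi y + cis2pi (- y)) / 2"
    and im: "complex_of_real (Im (cis2pi y)) = (cis2pi y - cis2pi (- y)) * (- \<i>) / 2" for y
    by (simp_all add: cis2pi_minus complex_add_cnj complex_diff_cnj field_simps)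
  have "complex_of_real (g (cis2pi y)) = trig_poly [((a - \<i> * b) / 2, 1), ((a + \<i> * b) / 2, -1)] y" for y
    unfolding decomp re im by (simp add: field_simps)
  then show ?case by blast
next
  case (const c)
  show ?case by (intro exI[of _ "[(complex_of_real c, 0)]"]) simp
next
  case (add f g)
  then obtain cs ds where "\<forall>y. complex_of_real (f (cis2pi y)) = trig_poly cs y"
    and "\<forall>y. complex_of_real (g (cis2pi y)) = trig_poly ds y" by blast
  then show ?case by (intro exI[of _ "cs @ ds"]) (simp add: trig_poly_append)
next
  case (mult f g)
  then obtain cs ds where "\<forall>y. complex_of_real (f (cis2pi y)) = trig_poly cs y"
    and "\<forall>y. complex_of_real (g (cis2pi y)) = trig_poly ds y" by blast
  then show ?case by (auto simp: trig_poly_mult)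
qed

lemma polynomial_function_on_circle:
  assumes "polynomial_function p"
  shows "\<exists>cs. \<forall>y. p (cis2pi y) = trig_poly cs y"
proof -
  have "real_polynomial_function (Re \<circ> p)" "real_polynomial_function (Im \<circ> p)"
    using assms unfolding polynomial_function_def by (auto intro: bounded_linear_Re bounded_linear_Im)
  then obtain cs ds where cs: "\<And>y. complex_of_real (Re (p (cis2pi y))) = trig_poly cs y"
     and ds: "\<And>y. complex_of_real (Im (p (cis2pi y))) = trig_poly ds y"
    using real_polynomial_function_on_circle by (metis comp_apply)
  have "p (cis2pi y) = trig_poly (cs @ map (\<lambda>q. (\<i> * fst q, snd q)) ds) y" for y
  proof -
    have "trig_poly (map (\<lambda>q. (\<i> * fst q, snd q)) ds) y = \<i> * trig_poly ds y"
      by (induction ds) (simp_all add: algebra_simps)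
    then show ?thesis
      by (simp add: trig_poly_append complex_eq_iff flip: cs ds)
  qed
  then show ?thesis by blast
qed

lemma cis2pi_Arg: "norm z = 1 \<Longrightarrow> cis2pi (Arg z / (2 * pi)) = z"
  using cis_Arg[of z] by (cases "z = 0") (auto simp: cis2pi_def sgn_eq)

lemma cis2pi_Arg2pi: "norm z = 1 \<Longrightarrow> cis2pi (Arg2pi z / (2 * pi)) = z"
  using complex_norm_eq_1_exp[of z] by (simp add: cis2pi_def cis_conv_exp)

lemma periodic_continuous_lift_to_circle:
  fixes H :: "real \<Rightarrow> 'a::topological_space"
  assumes cont: "\<And>x. isCont H x" and per: "\<And>x. H (x + 1) = H x"
  shows "continuous_on (sphere 0 1) (\<lambda>z. H (Arg z / (2 * pi)))"
    and "H (Arg (cis2pi y) / (2 * pi)) = H y"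
proof -
  have lift_eq: "H s = H t" if "cis2pi s = cis2pi t" for s t
    using that by (intro periodic_eq_if_diff_Ints[of H, OF per]) (simp add: cis2pi_eq_cis2pi_iff)
  show "H (Arg (cis2pi y) / (2 * pi)) = H y"
    by (rule lift_eq) (simp add: cis2pi_Arg)
  show "continuous_on (sphere 0 1) (\<lambda>z. H (Arg z / (2 * pi)))"
  proof (rule continuous_on_eq_continuous_within[THEN iffD2], intro ballI)
    fix z :: complex assume z: "z \<in> sphere 0 1"
    show "continuous (at z within sphere 0 1) (\<lambda>z. H (Arg z / (2 * pi)))"
    proof (cases "z \<in> \<real>\<^sub>\<le>\<^sub>0")
      case False
      have "isCont (\<lambda>z. Arg z / (2 * pi)) z"
        using continuous_at_Arg[OF False] by (intro continuous_intros) auto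
      then have "isCont (\<lambda>z. H (Arg z / (2 * pi))) z"
        by (rule isCont_o2[OF _ cont])
      then show ?thesis
        by (rule continuous_at_imp_continuous_within)
    next
      case True
      \<comment> \<open>Near the negative axis, where \<open>Arg\<close> jumps, use the branch \<open>Arg2pi\<close> instead.\<close>
      with z have "z \<notin> \<real>\<^sub>\<ge>\<^sub>0"
        by (auto simp: nonpos_Reals_def nonneg_Reals_def)
      have agree: "H (Arg2pi w / (2 * pi)) = H (Arg w / (2 * pi))" if "w \<in> sphere 0 1" for w
        using that by (intro lift_eq) (simp add: cis2pi_Arg cis2pi_Arg2pi)
      have "isCont (\<lambda>z. Arg2pi z / (2 * pi)) z"
        using continuous_at_Arg2pi[OF \<open>z \<notin> \<real>\<^sub>\<ge>\<^sub>0\<close>] by (intro continuous_intros) auto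
      then have "isCont (\<lambda>z. H (Arg2pi z / (2 * pi))) z"
        by (rule isCont_o2[OF _ cont])
      then have "continuous (at z within sphere 0 1) (\<lambda>z. H (Arg2pi z / (2 * pi)))"
        by (rule continuous_at_imp_continuous_within)
      then show ?thesis
        by (rule continuous_transform_within[where \<delta> = 1]) (use z agree in auto)
    qed
  qed
qed

lemma periodic_uniform_approx_by_trig_poly:
  fixes H :: "real \<Rightarrow> complex"
  assumes cont: "\<And>x. isCont H x" and per: "\<And>x. H (x + 1) = H x" and "e > 0"
  obtains cs where "\<And>y. norm (H y - trig_poly cs y) < e"
proof -
  obtain p where p: "polynomial_function p"
    and close: "\<And>z. z \<in> sphere 0 1 \<Longrightarrow> norm (H (Arg z / (2 * pi)) - p z) < e"
    using Stone_Weierstrass_polynomial_function[OF compact_sphere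
          periodic_continuous_lift_to_circle(1)[OF cont per] \<open>e > 0\<close>] by blast
  obtain cs where "\<And>y. p (cis2pi y) = trig_poly cs y"
    using polynomial_function_on_circle[OF p] by blast
  with close[of "cis2pi _"] show thesis
    by (intro that[of cs]) (simp add: periodic_continuous_lift_to_circle(2)[OF cont per])
qed

lemma integral_mult_trig_poly_eq_0:
  fixes H :: "real \<Rightarrow> complex"
  assumes cont: "continuous_on {0..1} H"
    and coeffs: "\<And>n::int. integral {0..1} (\<lambda>x. H x * cis2pi (of_int n * x)) = 0"
  shows "integral {0..1} (\<lambda>y. H y * trig_poly cs y) = 0"
proof (induction cs)
  case (Cons p cs)
  have "integral {0..1} (\<lambda>y. H y * trig_poly (p # cs) y)
      = fst p * integral {0..1} (\<lambda>y. H y * cis2pi (of_int (snd p) * y))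
        + integral {0..1} (\<lambda>y. H y * trig_poly cs y)"
    by (simp add: algebra_simps integral_add integrable_continuous_real continuous_intros cont
             flip: integral_mult_right)
  then show ?case using Cons coeffs by simp
qed simp

lemma integral_mult_cnj_eq_0_if_fourier_coeffs_eq_0:
  fixes H :: "real \<Rightarrow> complex"
  assumes cont: "\<And>x. isCont H x" and per: "\<And>x. H (x + 1) = H x"
    and coeffs: "\<And>n::int. integral {0..1} (\<lambda>x. H x * cis2pi (of_int n * x)) = 0"
  shows "integral {0..1} (\<lambda>y. H y * cnj (H y)) = 0"
proof -
  have cont_on: "continuous_on A H" for A
    by (simp add: cont continuous_at_imp_continuous_on)
  obtain B where B: "B > 0" "\<And>y. y \<in> {0..1} \<Longrightarrow> norm (H y) \<le> B"
  proof -
    have "bounded (H ` {0..1})"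
      by (intro compact_imp_bounded compact_continuous_image cont_on compact_Icc)
    then show thesis using that by (auto simp: bounded_pos)
  qed
  define I where "I = integral {0..1} (\<lambda>y. H y * cnj (H y))"
  have small: "norm I \<le> B * e" if "e > 0" for e
  proof -
    obtain cs where cs: "\<And>y. norm (cnj (H y) - trig_poly cs y) < e"
      using periodic_uniform_approx_by_trig_poly[of "\<lambda>y. cnj (H y)"] cont per \<open>e > 0\<close>
      by (metis continuous_cnj)
    have "I = integral {0..1} (\<lambda>y. H y * (cnj (H y) - trig_poly cs y))"
      using integral_mult_trig_poly_eq_0[OF cont_on coeffs, of cs] unfolding I_def
      by (simp add: algebra_simps integral_diff integrable_continuous_real continuous_intros cont_on)
    also have "norm \<dots> \<le> (B * e) * (1 - 0)"
    proof (rule integral_bound)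
      fix y :: real assume "y \<in> {0..1}"
      then show "norm (H y * (cnj (H y) - trig_poly cs y)) \<le> B * e"
        using mult_mono[OF B(2) less_imp_le[OF cs[of y]]] B(1) by (simp add: norm_mult)
    qed (auto intro!: continuous_intros cont_on)
    finally show ?thesis by simp
  qed
  have "norm I \<le> 0"
  proof (rule field_le_epsilon)
    fix e :: real assume "e > 0"
    then show "norm I \<le> 0 + e" using small[of "e / B"] B by simp
  qed
  then show ?thesis
    by (simp add: I_def)
qed

lemma periodic_eq_0_if_fourier_coeffs_eq_0:
  fixes H :: "real \<Rightarrow> complex"
  assumes cont: "\<And>x. isCont H x" and per: "\<And>x. H (x + 1) = H x"
    and coeffs: "\<And>n::int. integral {0..1} (\<lambda>x. H x * cis2pi (of_int n * x)) = 0"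
  shows "H x = 0"
proof -
  have cont_on: "continuous_on A H" for A
    by (simp add: cont continuous_at_imp_continuous_on)
  have "(\<lambda>y. H y * cnj (H y)) integrable_on {0..1}"
    by (intro integrable_continuous_real continuous_intros cont_on)
  then have "((\<lambda>y. H y * cnj (H y)) has_integral 0) {0..1}"
    using integral_mult_cnj_eq_0_if_fourier_coeffs_eq_0[OF cont per coeffs] by (metis integrable_integral)
  then have "((\<lambda>y. (norm (H y))\<^sup>2) has_integral 0) (cbox 0 1)"
    using has_integral_Re[of "\<lambda>y. H y * cnj (H y)" 0 "{0..1}"]
    by (simp add: complex_norm_square[symmetric])
  then have "(norm (H y))\<^sup>2 = 0" if "y \<in> {0..1}" for y
    using that by (intro has_integral_0_cbox_imp_0) (auto intro!: continuous_intros cont_on)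
  from this[of "frac x"] have "H (frac x) = 0"
    using frac_lt_1[of x] by simp
  moreover have "x - frac x \<in> \<int>"
    by (simp add: frac_def)
  ultimately show ?thesis
    using periodic_eq_if_diff_Ints[of H, OF per, of x "frac x"] by argo
qed

section \<open>Poisson summation for the Gaussian\<close>

lemma fourier_series_absolutely_summable:
  fixes c :: "int \<Rightarrow> complex"
  assumes summable: "(\<lambda>n. norm (c n)) summable_on UNIV"
  defines "F \<equiv> \<lambda>x. \<Sum>\<^sub>\<infinity>n. c n * cis2pi (of_int n * x)"
  shows "isCont F x"
    and "F (x + 1) = F x"
    and "integral {0..1} (\<lambda>x. F x * cis2pi (of_int m * x)) = c (- m)"
proof -
  have "continuous_on {x - 1..x + 1} F"
    unfolding F_def
    by (rule has_sum_integral_Weierstrass(2)[OF _ summable]) (auto simp: norm_mult intro!: continuous_intros)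
  then show "isCont F x"
    by (rule continuous_on_interior) auto
  show "F (x + 1) = F x"
    unfolding F_def by (simp add: distrib_left cis2pi_add)
  have "((\<lambda>n. integral {0..1} (\<lambda>x. c n * cis2pi (of_int n * x) * cis2pi (of_int m * x))) has_sum
      integral {0..1} (\<lambda>x. \<Sum>\<^sub>\<infinity>n. c n * cis2pi (of_int n * x) * cis2pi (of_int m * x))) UNIV"
    by (rule has_sum_integral_Weierstrass(1)[OF _ summable]) (auto simp: norm_mult intro!: continuous_intros)
  moreover have "(\<Sum>\<^sub>\<infinity>n. c n * cis2pi (of_int n * x) * cis2pi (of_int m * x)) = F x * cis2pi (of_int m * x)" for x
  proof -
    have "(\<lambda>n. c n * cis2pi (of_int n * x)) summable_on UNIV"
      by (rule abs_summable_summable) (use summable in \<open>simp add: norm_mult\<close>)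
    then show ?thesis unfolding F_def by (rule infsum_cmult_left)
  qed
  moreover have "integral {0..1} (\<lambda>x. c n * cis2pi (of_int n * x) * cis2pi (of_int m * x))
      = (if n = - m then c (- m) else 0)" for n
  proof -
    have "integral {0..1} (\<lambda>x. c n * cis2pi (of_int n * x) * cis2pi (of_int m * x))
        = c n * integral {0..1} (\<lambda>x. cis2pi (of_int (n + m) * x))"
      by (simp add: mult.assoc distrib_right cis2pi_add flip: integral_mult_right)
    then show ?thesis unfolding integral_cis2pi_int by (auto simp: add_eq_0_iff)
  qed
  moreover have "((\<lambda>n::int. if n = - m then c (- m) else 0) has_sum c (- m)) UNIV"
  proof -
    have "((\<lambda>n::int. if n = - m then c (- m) else 0) has_sum c (- m)) {- m}"
      by (rule has_sum_finiteI) auto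
    then show ?thesis by (subst (asm) has_sum_cong_neutral[where T = UNIV]) auto
  qed
  ultimately show "integral {0..1} (\<lambda>x. F x * cis2pi (of_int m * x)) = c (- m)"
    using has_sum_unique by fastforce
qed

definition gauss_coeff :: "real \<Rightarrow> int \<Rightarrow> real" where
  "gauss_coeff \<sigma> n = exp (- (of_int n)\<^sup>2 / \<sigma>\<^sup>2 / 2)"

lemma gauss_coeff_pos: "gauss_coeff \<sigma> n > 0"
  by (simp add: gauss_coeff_def)

lemma summable_on_gauss_coeff:
  assumes "\<sigma> > 0"
  shows "gauss_coeff \<sigma> summable_on UNIV"
proof -
  have "gauss_coeff \<sigma> = (\<lambda>n. exp (- (1 / (2 * \<sigma>\<^sup>2)) * (of_int n)\<^sup>2))"
    by (auto simp: gauss_coeff_def fun_eq_iff field_simps)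
  then show ?thesis
    using summable_on_exp_neg_sq_int[of "1 / (2 * \<sigma>\<^sup>2)"] assms by simp
qed

lemma gauss_series_eq: "gauss_series \<sigma> x = (\<Sum>\<^sub>\<infinity>n. complex_of_real (gauss_coeff \<sigma> n) * cis2pi (of_int n * x))"
  unfolding gauss_series_def gauss_coeff_def exp_eq_cis2pi ..

lemma has_sum_gauss_series:
  assumes "\<sigma> > 0"
  shows "((\<lambda>n. complex_of_real (gauss_coeff \<sigma> n) * cis2pi (of_int n * x)) has_sum gauss_series \<sigma> x) UNIV"
  unfolding gauss_series_eq
  by (rule has_sum_infsum, rule abs_summable_summable)
     (use summable_on_gauss_coeff[OF assms] in \<open>simp add: norm_mult abs_of_pos gauss_coeff_pos\<close>)

lemma gauss_series_0:
  assumes "\<sigma> > 0"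
  shows "gauss_series \<sigma> 0 = complex_of_real (infsum (gauss_coeff \<sigma>) UNIV)"
proof -
  have "((\<lambda>n. complex_of_real (gauss_coeff \<sigma> n)) has_sum complex_of_real (infsum (gauss_coeff \<sigma>) UNIV)) UNIV"
    by (intro has_sum_of_real has_sum_infsum summable_on_gauss_coeff assms)
  with has_sum_gauss_series[OF assms, of 0] show ?thesis
    using has_sum_unique by fastforce
qed

lemma infsum_gauss_coeff_ge_1:
  assumes "\<sigma> > 0"
  shows "infsum (gauss_coeff \<sigma>) UNIV \<ge> 1"
proof -
  have "infsum (gauss_coeff \<sigma>) {0} \<le> infsum (gauss_coeff \<sigma>) UNIV"
    by (rule infsum_mono_neutral) (auto intro: summable_on_gauss_coeff[OF assms] less_imp_le[OF gauss_coeff_pos])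
  then show ?thesis by (simp add: gauss_coeff_def)
qed

lemma
  assumes "\<sigma> > 0"
  shows isCont_gauss_series: "isCont (gauss_series \<sigma>) x"
    and gauss_series_plus_1: "gauss_series \<sigma> (x + 1) = gauss_series \<sigma> x"
    and gauss_series_fourier_coeff:
      "integral {0..1} (\<lambda>x. gauss_series \<sigma> x * cis2pi (of_int m * x)) = complex_of_real (gauss_coeff \<sigma> m)"
proof -
  have summable: "(\<lambda>n. norm (complex_of_real (gauss_coeff \<sigma> n))) summable_on UNIV"
    using summable_on_gauss_coeff[OF assms] by (simp add: abs_of_pos gauss_coeff_pos)
  have F: "gauss_series \<sigma> = (\<lambda>x. \<Sum>\<^sub>\<infinity>n. complex_of_real (gauss_coeff \<sigma> n) * cis2pi (of_int n * x))"
    by (simp add: gauss_series_eq fun_eq_iff)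
  show "isCont (gauss_series \<sigma>) x" "gauss_series \<sigma> (x + 1) = gauss_series \<sigma> x"
    unfolding F by (rule fourier_series_absolutely_summable[OF summable])+
  show "integral {0..1} (\<lambda>x. gauss_series \<sigma> x * cis2pi (of_int m * x)) = complex_of_real (gauss_coeff \<sigma> m)"
    unfolding F fourier_series_absolutely_summable(3)[OF summable] by (simp add: gauss_coeff_def)
qed

text \<open>By Poisson summation this periodization is proportional to the periodic Gaussian; in this
  form its decay away from the integers is visible.\<close>

definition gauss_periodization :: "real \<Rightarrow> real \<Rightarrow> real" where
  "gauss_periodization a y = (\<Sum>\<^sub>\<infinity>k::int. exp (- a * (y + of_int k)\<^sup>2))"

lemma exp_neg_sq_shift_le:
  fixes a y R :: real
  assumes "a > 0" and "\<bar>y\<bar> \<le> R"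
  shows "exp (- a * (y + of_int k)\<^sup>2) \<le> exp (a * R\<^sup>2) * exp (- (a / 2) * (of_int k)\<^sup>2)"
proof -
  have "(y + of_int k)\<^sup>2 + y\<^sup>2 - (of_int k)\<^sup>2 / 2 = 2 * (y + of_int k / 2)\<^sup>2"
    by (simp add: power2_eq_square algebra_simps)
  moreover have "y\<^sup>2 \<le> R\<^sup>2"
    using assms(2) by (metis abs_le_square_iff abs_of_nonneg abs_ge_zero order_trans)
  ultimately have "(of_int k)\<^sup>2 / 2 \<le> (y + of_int k)\<^sup>2 + R\<^sup>2"
    using zero_le_power2[of "y + of_int k / 2"] by linarith
  then have "- a * (y + of_int k)\<^sup>2 \<le> a * R\<^sup>2 + - (a / 2) * (of_int k)\<^sup>2"
    using mult_left_mono[of "(of_int k)\<^sup>2 / 2" "(y + of_int k)\<^sup>2 + R\<^sup>2" a] assms(1)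
    by (simp add: algebra_simps)
  then show ?thesis by (simp add: exp_add[symmetric])
qed

lemma summable_on_gauss_shift_majorant:
  fixes a R :: real
  assumes "a > 0"
  shows "(\<lambda>k::int. exp (a * R\<^sup>2) * exp (- (a / 2) * (of_int k)\<^sup>2)) summable_on UNIV"
  using assms by (intro summable_on_cmult_right summable_on_exp_neg_sq_int) simp

lemma has_sum_gauss_periodization:
  assumes "a > 0"
  shows "((\<lambda>k::int. exp (- a * (y + of_int k)\<^sup>2)) has_sum gauss_periodization a y) UNIV"
  unfolding gauss_periodization_def
  by (rule has_sum_infsum, rule summable_on_comparison_test[OF summable_on_gauss_shift_majorant[OF assms]])
     (use exp_neg_sq_shift_le[OF assms, of y "\<bar>y\<bar>"] in auto)

lemma infsum_gauss_periodization_complex: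
  assumes "a > 0"
  shows "(\<Sum>\<^sub>\<infinity>k::int. complex_of_real (exp (- a * (y + of_int k)\<^sup>2)))
           = complex_of_real (gauss_periodization a y)"
  by (rule infsumI, rule has_sum_of_real, rule has_sum_gauss_periodization[OF assms])

lemma gauss_periodization_nonneg: "gauss_periodization a y \<ge> 0"
  unfolding gauss_periodization_def by (rule infsum_nonneg) auto

lemma gauss_periodization_0_ge_1:
  assumes "a > 0"
  shows "gauss_periodization a 0 \<ge> 1"
proof -
  have "(\<Sum>\<^sub>\<infinity>k\<in>{0::int}. exp (- a * (0 + of_int k)\<^sup>2)) \<le> (\<Sum>\<^sub>\<infinity>k. exp (- a * (0 + of_int k)\<^sup>2))"
    using has_sum_gauss_periodization[OF assms, of 0]
    by (intro infsum_mono_neutral) (auto dest: has_sum_imp_summable)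
  then show ?thesis unfolding gauss_periodization_def by simp
qed

lemma gauss_periodization_plus_1: "gauss_periodization a (y + 1) = gauss_periodization a y"
proof -
  have "bij_betw (\<lambda>k. k + 1) (UNIV :: int set) UNIV"
    by (rule bij_betwI[of _ _ _ "\<lambda>k. k - 1"]) auto
  then show ?thesis
    unfolding gauss_periodization_def
    using infsum_reindex_bij_betw[of "\<lambda>k. k + 1" UNIV UNIV "\<lambda>k. exp (- a * (y + of_int k)\<^sup>2)"]
    by (simp add: add_ac)
qed

lemma isCont_gauss_periodization:
  assumes "a > 0"
  shows "isCont (\<lambda>y. complex_of_real (gauss_periodization a y)) x"
proof -
  have "continuous_on {x - 1..x + 1} (\<lambda>y. \<Sum>\<^sub>\<infinity>k::int. complex_of_real (exp (- a * (y + of_int k)\<^sup>2)))"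
  proof (rule has_sum_integral_Weierstrass(2)[OF _ summable_on_gauss_shift_majorant[OF assms, of "\<bar>x\<bar> + 1"]])
    show "norm (complex_of_real (exp (- a * (y + of_int k)\<^sup>2)))
            \<le> exp (a * (\<bar>x\<bar> + 1)\<^sup>2) * exp (- (a / 2) * (of_int k)\<^sup>2)" if "y \<in> {x - 1..x + 1}" for k y
    proof -
      have "\<bar>y\<bar> \<le> \<bar>x\<bar> + 1"
        using that abs_ge_self[of x] abs_ge_minus_self[of x] by (auto simp: abs_le_iff)
      then show ?thesis using exp_neg_sq_shift_le[OF assms, of y "\<bar>x\<bar> + 1" k] by simp
    qed
  qed (auto intro!: continuous_intros)
  then have "continuous_on {x - 1..x + 1} (\<lambda>y. complex_of_real (gauss_periodization a y))"
    unfolding infsum_gauss_periodization_complex[OF assms] .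
  then show ?thesis
    by (rule continuous_on_interior) auto
qed

lemma gauss_periodization_fourier_coeff:
  assumes "a > 0"
  shows "integral {0..1} (\<lambda>y. complex_of_real (gauss_periodization a y) * cis2pi (of_int m * y))
           = complex_of_real (sqrt (pi / a) * exp (- pi\<^sup>2 * (of_int m)\<^sup>2 / a))"
proof -
  define g where "g u = complex_of_real (exp (- a * u\<^sup>2)) * cis2pi (of_int m * u)" for u
  have g_shift: "g (y + of_int k) = complex_of_real (exp (- a * (y + of_int k)\<^sup>2)) * cis2pi (of_int m * y)" for y k
    using cis2pi_plus_of_int[of "of_int m * y" "m * k"] by (simp add: g_def distrib_left)
  have "((\<lambda>k. integral {0..1} (\<lambda>y. g (y + of_int k))) has_sum
      integral {0..1} (\<lambda>y. \<Sum>\<^sub>\<infinity>k::int. complex_of_real (exp (- a * (y + of_int k)\<^sup>2)) * cis2pi (of_int m * y))) UNIV"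
    unfolding g_shift
  proof (rule has_sum_integral_Weierstrass(1)[OF _ summable_on_gauss_shift_majorant[OF assms, of 1]])
    show "norm (complex_of_real (exp (- a * (y + of_int k)\<^sup>2)) * cis2pi (of_int m * y))
            \<le> exp (a * 1\<^sup>2) * exp (- (a / 2) * (of_int k)\<^sup>2)" if "y \<in> {0..1}" for k y
      using exp_neg_sq_shift_le[OF assms, of y 1 k] that by (simp add: norm_mult)
  qed (auto intro!: continuous_intros)
  also have "(\<lambda>y. \<Sum>\<^sub>\<infinity>k::int. complex_of_real (exp (- a * (y + of_int k)\<^sup>2)) * cis2pi (of_int m * y))
      = (\<lambda>y. complex_of_real (gauss_periodization a y) * cis2pi (of_int m * y))"
  proof
    fix y
    have summable: "(\<lambda>k::int. complex_of_real (exp (- a * (y + of_int k)\<^sup>2))) summable_on UNIV"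
      by (intro summable_on_of_real has_sum_imp_summable[OF has_sum_gauss_periodization[OF assms]])
    show "(\<Sum>\<^sub>\<infinity>k::int. complex_of_real (exp (- a * (y + of_int k)\<^sup>2)) * cis2pi (of_int m * y))
        = complex_of_real (gauss_periodization a y) * cis2pi (of_int m * y)"
      using infsum_cmult_left[OF summable, of "cis2pi (of_int m * y)"]
        infsum_gauss_periodization_complex[OF assms, of y] by simp
  qed
  finally have "(LINT u|lborel. g u)
      = integral {0..1} (\<lambda>y. complex_of_real (gauss_periodization a y) * cis2pi (of_int m * y))"
    using gauss_fourier_transform(1)[OF assms] unfolding g_def
    by (intro lborel_integral_eq_sum_unit_translates) (auto intro!: continuous_intros)
  then show ?thesis
    using gauss_fourier_transform(2)[OF assms, of "of_int m"] by (simp add: g_def)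
qed

lemma gauss_series_poisson:
  assumes "\<sigma> > 0" and a: "a = 2 * pi\<^sup>2 * \<sigma>\<^sup>2"
  shows "complex_of_real (sqrt (pi / a)) * gauss_series \<sigma> x = complex_of_real (gauss_periodization a x)"
proof -
  have "a > 0" using assms by simp
  define H where "H x = complex_of_real (sqrt (pi / a)) * gauss_series \<sigma> x
                         - complex_of_real (gauss_periodization a x)" for x
  have "H x = 0"
  proof (rule periodic_eq_0_if_fourier_coeffs_eq_0)
    show "isCont H x" for x
      unfolding H_def
      by (intro continuous_intros isCont_gauss_series isCont_gauss_periodization assms \<open>a > 0\<close>)
    show "H (x + 1) = H x" for x
      by (simp add: H_def gauss_series_plus_1[OF assms(1)] gauss_periodization_plus_1)
    fix n :: int
    have integrable: "(\<lambda>x. G x * cis2pi (of_int n * x)) integrable_on {0..1}" if "\<And>x. isCont G x" for G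
      using that by (intro integrable_continuous_real continuous_at_imp_continuous_on ballI continuous_intros)
    have "integral {0..1} (\<lambda>x. H x * cis2pi (of_int n * x))
        = complex_of_real (sqrt (pi / a)) * integral {0..1} (\<lambda>x. gauss_series \<sigma> x * cis2pi (of_int n * x))
          - integral {0..1} (\<lambda>x. complex_of_real (gauss_periodization a x) * cis2pi (of_int n * x))"
      unfolding H_def left_diff_distrib mult.assoc
      by (subst integral_diff)
         (auto intro!: integrable_on_cmult_left integrable isCont_gauss_series isCont_gauss_periodization
               assms \<open>a > 0\<close> simp flip: integral_mult_right)
    also have "pi\<^sup>2 * (of_int n)\<^sup>2 / a = (of_int n)\<^sup>2 / \<sigma>\<^sup>2 / 2"
      using assms by (simp add: field_simps)
    then have "complex_of_real (sqrt (pi / a)) * integral {0..1} (\<lambda>x. gauss_series \<sigma> x * cis2pi (of_int n * x))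
          - integral {0..1} (\<lambda>x. complex_of_real (gauss_periodization a x) * cis2pi (of_int n * x)) = 0"
      by (simp add: gauss_series_fourier_coeff[OF assms(1)] gauss_periodization_fourier_coeff[OF \<open>a > 0\<close>]
                    gauss_coeff_def)
    finally show "integral {0..1} (\<lambda>x. H x * cis2pi (of_int n * x)) = 0" .
  qed
  then show ?thesis by (simp add: H_def)
qed

lemma periodic_gauss_eq_periodization:
  assumes "\<sigma> > 0"
  shows "periodic_gauss \<sigma> y
           = complex_of_real (gauss_periodization (2 * pi\<^sup>2 * \<sigma>\<^sup>2) y / gauss_periodization (2 * pi\<^sup>2 * \<sigma>\<^sup>2) 0)"
proof -
  define a where "a = 2 * pi\<^sup>2 * \<sigma>\<^sup>2"
  have "a > 0" "sqrt (pi / a) > 0"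
    using assms by (simp_all add: a_def)
  then have "gauss_series \<sigma> x = complex_of_real (gauss_periodization a x) / complex_of_real (sqrt (pi / a))" for x
    using gauss_series_poisson[OF assms a_def, of x] by (simp add: eq_divide_eq mult.commute)
  with \<open>a > 0\<close> show ?thesis
    unfolding periodic_gauss_def a_def[symmetric] by simp
qed

section \<open>Gaussian tails\<close>

lemma exp_neg_sq_le_geometric:
  fixes a R t :: real
  assumes "a > 0" and "R \<ge> 0" and "R + real j \<le> \<bar>t\<bar>"
  shows "exp (- a * t\<^sup>2) \<le> exp (- a * R\<^sup>2) * exp (- 2 * a * R) ^ j"
proof -
  have "(R + real j)\<^sup>2 \<le> t\<^sup>2"
    using assms(2,3) by (metis abs_le_square_iff abs_of_nonneg add_nonneg_nonneg of_nat_0_le_iff order_trans abs_ge_zero)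
  then have "R\<^sup>2 + real j * (2 * R) \<le> t\<^sup>2"
    by (simp add: power2_eq_square algebra_simps) (smt (verit) mult_nonneg_nonneg of_nat_0_le_iff)
  then have "- a * t\<^sup>2 \<le> - a * R\<^sup>2 + real j * (- 2 * a * R)"
    using mult_left_mono[of "R\<^sup>2 + real j * (2 * R)" "t\<^sup>2" a] assms(1) by (simp add: algebra_simps)
  then have "exp (- a * t\<^sup>2) \<le> exp (- a * R\<^sup>2 + real j * (- 2 * a * R))"
    by simp
  also have "\<dots> = exp (- a * R\<^sup>2) * exp (- 2 * a * R) ^ j"
    by (simp only: exp_add exp_of_nat_mult)
  finally show ?thesis .
qed

text \<open>The lattice points \<open>y + k\<close> beyond \<open>R\<close> on either side are at least \<open>R, R + 1, R + 2, \<dots>\<close> away from \<open>0\<close>.\<close>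

lemma exp_neg_sq_le_two_sided_geometric:
  fixes a R y :: real
  assumes "a > 0" and "R \<ge> 0" and far: "R \<le> \<bar>y + of_int k\<bar>"
  shows "exp (- a * (y + of_int k)\<^sup>2) \<le> exp (- a * R\<^sup>2)
           * (exp (- 2 * a * R) ^ nat \<bar>k - \<lceil>R - y\<rceil>\<bar> + exp (- 2 * a * R) ^ nat \<bar>k - \<lfloor>- R - y\<rfloor>\<bar>)"
proof -
  define k_right k_left where "k_right = \<lceil>R - y\<rceil>" and "k_left = \<lfloor>- R - y\<rfloor>"
  have "R + real (nat \<bar>k - k_right\<bar>) \<le> \<bar>y + of_int k\<bar> \<or> R + real (nat \<bar>k - k_left\<bar>) \<le> \<bar>y + of_int k\<bar>"
  proof (cases "y + of_int k \<ge> 0")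
    case True
    with far have "R - y \<le> of_int k" by simp
    then have "k_right \<le> k" by (simp add: k_right_def ceiling_le_iff)
    moreover have "R - y \<le> of_int k_right" unfolding k_right_def by (rule le_of_int_ceiling)
    ultimately show ?thesis
      using True by (simp add: of_nat_nat)
  next
    case False
    with far have "of_int k \<le> - R - y" by simp
    then have "k \<le> k_left" by (simp add: k_left_def le_floor_iff)
    moreover have "of_int k_left \<le> - R - y" unfolding k_left_def by (rule of_int_floor_le)
    ultimately show ?thesis
      using False by (simp add: of_nat_nat)
  qed
  then have "exp (- a * (y + of_int k)\<^sup>2) \<le> exp (- a * R\<^sup>2) * exp (- 2 * a * R) ^ nat \<bar>k - k_right\<bar>
           \<or> exp (- a * (y + of_int k)\<^sup>2) \<le> exp (- a * R\<^sup>2) * exp (- 2 * a * R) ^ nat \<bar>k - k_left\<bar>"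
    using exp_neg_sq_le_geometric[OF assms(1,2)] by blast
  then show ?thesis
    unfolding k_right_def k_left_def distrib_left
    by (smt (verit) exp_ge_zero mult_nonneg_nonneg zero_le_power)
qed

lemma gauss_lattice_tail:
  fixes a R y :: real
  assumes "a > 0" and "R > 0"
  shows "(\<Sum>\<^sub>\<infinity>k\<in>{k::int. R \<le> \<bar>y + of_int k\<bar>}. exp (- a * (y + of_int k)\<^sup>2))
           \<le> 4 * exp (- a * R\<^sup>2) / (1 - exp (- 2 * a * R))"
proof -
  define \<rho> c where "\<rho> = exp (- 2 * a * R)" and "c = exp (- a * R\<^sup>2)"
  have \<rho>: "0 \<le> \<rho>" "\<rho> < 1" and "c \<ge> 0"
    using assms by (auto simp: \<rho>_def c_def)
  define h where "h k = c * (\<rho> ^ nat \<bar>k - \<lceil>R - y\<rceil>\<bar> + \<rho> ^ nat \<bar>k - \<lfloor>- R - y\<rfloor>\<bar>)" for k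
  have h_sum: "(h has_sum (c * ((1 + \<rho>) / (1 - \<rho>) + (1 + \<rho>) / (1 - \<rho>)))) UNIV"
    unfolding h_def by (intro has_sum_cmult_right has_sum_add has_sum_geometric_int \<rho>)
  have bound: "exp (- a * (y + of_int k)\<^sup>2) \<le> h k" if "R \<le> \<bar>y + of_int k\<bar>" for k
    unfolding h_def c_def \<rho>_def using assms that by (intro exp_neg_sq_le_two_sided_geometric) auto
  have h_nonneg: "h k \<ge> 0" for k
    unfolding h_def using \<rho> \<open>c \<ge> 0\<close> by simp
  have "(\<Sum>\<^sub>\<infinity>k\<in>{k::int. R \<le> \<bar>y + of_int k\<bar>}. exp (- a * (y + of_int k)\<^sup>2)) \<le> infsum h UNIV"
  proof (rule infsum_mono_neutral)
    have "h summable_on {k. R \<le> \<bar>y + of_int k\<bar>}"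
      using h_sum by (auto intro: summable_on_subset_banach dest: has_sum_imp_summable)
    then show "(\<lambda>k. exp (- a * (y + of_int k)\<^sup>2)) summable_on {k. R \<le> \<bar>y + of_int k\<bar>}"
      by (rule summable_on_comparison_test) (use bound in auto)
    show "h summable_on UNIV"
      using h_sum by (rule has_sum_imp_summable)
  qed (use bound h_nonneg in auto)
  also have "\<dots> = 2 * c * (1 + \<rho>) / (1 - \<rho>)"
    using h_sum by (simp add: infsumI)
  also have "\<dots> \<le> 4 * c / (1 - \<rho>)"
    using \<rho> \<open>c \<ge> 0\<close> mult_left_mono[of "1 + \<rho>" 2 c] by (intro divide_right_mono) auto
  finally show ?thesis
    by (simp add: c_def \<rho>_def)
qed

lemma frac_bounds_if_far_from_Ints:
  assumes "\<not> (\<exists>k::int. \<bar>y - of_int k\<bar> \<le> r)"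
  shows "r < frac y" and "frac y < 1 - r"
proof -
  have "\<not> \<bar>y - of_int \<lfloor>y\<rfloor>\<bar> \<le> r" "\<not> \<bar>y - of_int (\<lfloor>y\<rfloor> + 1)\<bar> \<le> r"
    using assms by blast+
  then show "r < frac y" "frac y < 1 - r"
    using frac_lt_1[of y] by (auto simp: frac_def)
qed

lemma norm_periodic_gauss_far_from_Ints:
  assumes "\<sigma> > 0" and "r > 0" and far: "\<not> (\<exists>k::int. \<bar>y - of_int k\<bar> \<le> r)"
  shows "norm (periodic_gauss \<sigma> y)
           \<le> 4 * exp (- (2 * pi\<^sup>2 * \<sigma>\<^sup>2) * r\<^sup>2) / (1 - exp (- 2 * (2 * pi\<^sup>2 * \<sigma>\<^sup>2) * r))"
proof -
  define a where "a = 2 * pi\<^sup>2 * \<sigma>\<^sup>2"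
  have "a > 0" using assms by (simp add: a_def)
  have "r \<le> \<bar>y + of_int k\<bar>" for k
  proof -
    have "\<not> \<bar>y - of_int (- k)\<bar> \<le> r" using far by blast
    then show ?thesis by simp
  qed
  then have "{k::int. r \<le> \<bar>y + of_int k\<bar>} = UNIV"
    by blast
  then have "gauss_periodization a y = (\<Sum>\<^sub>\<infinity>k\<in>{k::int. r \<le> \<bar>y + of_int k\<bar>}. exp (- a * (y + of_int k)\<^sup>2))"
    by (simp add: gauss_periodization_def)
  also have "\<dots> \<le> 4 * exp (- a * r\<^sup>2) / (1 - exp (- 2 * a * r))"
    by (rule gauss_lattice_tail[OF \<open>a > 0\<close> \<open>r > 0\<close>])
  finally have "gauss_periodization a y \<le> 4 * exp (- a * r\<^sup>2) / (1 - exp (- 2 * a * r))" .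
  moreover have "norm (periodic_gauss \<sigma> y) \<le> gauss_periodization a y"
    using periodic_gauss_eq_periodization[OF assms(1), of y] gauss_periodization_0_ge_1[OF \<open>a > 0\<close>]
      gauss_periodization_nonneg[of a y]
    by (simp add: a_def[symmetric] norm_divide divide_le_eq mult_le_cancel_left1)
  ultimately show ?thesis
    by (simp add: a_def)
qed

lemma gauss_coeff_tail:
  assumes "\<sigma> > 0" and "R > 0"
  shows "(\<Sum>\<^sub>\<infinity>n\<in>{n::int. R \<le> \<bar>of_int n\<bar>}. gauss_coeff \<sigma> n) \<le> 4 * exp (- R\<^sup>2 / (2 * \<sigma>\<^sup>2)) / (1 - exp (- R / \<sigma>\<^sup>2))"
proof -
  have "gauss_coeff \<sigma> = (\<lambda>n. exp (- (1 / (2 * \<sigma>\<^sup>2)) * (0 + of_int n)\<^sup>2))"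
    by (simp add: gauss_coeff_def field_simps fun_eq_iff)
  then have "(\<Sum>\<^sub>\<infinity>n\<in>{n::int. R \<le> \<bar>of_int n\<bar>}. gauss_coeff \<sigma> n)
      = (\<Sum>\<^sub>\<infinity>n\<in>{n::int. R \<le> \<bar>0 + of_int n\<bar>}. exp (- (1 / (2 * \<sigma>\<^sup>2)) * (0 + of_int n)\<^sup>2))"
    by (simp only: add_0_left)
  also have "\<dots> \<le> 4 * exp (- (1 / (2 * \<sigma>\<^sup>2)) * R\<^sup>2) / (1 - exp (- 2 * (1 / (2 * \<sigma>\<^sup>2)) * R))"
    using assms by (intro gauss_lattice_tail) auto
  finally show ?thesis
    using assms by (simp add: field_simps)
qed

section \<open>Sampling and aliasing\<close>

lemma sin_ge_half_self:
  fixes x :: real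
  assumes "0 \<le> x" and "x \<le> 1"
  shows "x / 2 \<le> sin x"
proof -
  have "\<bar>sin x - (\<Sum>m<3. sin_coeff m * x ^ m)\<bar> \<le> inverse (fact 3) * \<bar>x\<bar> ^ 3"
    by (rule Maclaurin_sin_bound)
  moreover have "(\<Sum>m<3. sin_coeff m * x ^ m) = x"
    by (simp add: sin_coeff_def eval_nat_numeral)
  moreover have "inverse (fact 3) * \<bar>x\<bar> ^ 3 = x ^ 3 / 6"
    using assms by (simp add: eval_nat_numeral)
  ultimately have "\<bar>sin x - x\<bar> \<le> x ^ 3 / 6"
    by simp
  moreover have "x ^ 3 \<le> x"
    using assms mult_left_mono[of "x * x" 1 x] mult_le_one[of x x] by (simp add: power3_eq_cube)
  ultimately show ?thesis
    using assms abs_le_iff[of "sin x - x" "x ^ 3 / 6"] by linarith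
qed

lemma abs_sin_pi_ge_if_far_from_Ints:
  assumes "0 < r" and "r \<le> 1 / 2" and far: "\<not> (\<exists>k::int. \<bar>y - of_int k\<bar> \<le> r)"
  shows "sin (pi * r) \<le> \<bar>sin (pi * y)\<bar>"
proof -
  have frac: "r < frac y" "frac y < 1 - r"
    using frac_bounds_if_far_from_Ints[OF far] by auto
  have "cis2pi y = cis2pi (frac y)"
    using cis2pi_plus_of_int[of "frac y" "\<lfloor>y\<rfloor>"] by (simp add: frac_def)
  then have "\<bar>sin (pi * y)\<bar> = sin (pi * frac y)"
    using norm_1_minus_cis2pi[of y] norm_1_minus_cis2pi[of "frac y"] frac assms
    by (simp add: sin_ge_zero)
  moreover have "sin (pi * r) \<le> sin (pi * frac y)"
  proof (cases "frac y \<le> 1 / 2")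
    case True
    have "0 \<le> pi * r" "pi * r \<le> pi * frac y" "pi * frac y \<le> pi / 2"
      using frac assms True by auto
    then show ?thesis
      by (intro sin_monotone_2pi_le) (use pi_gt_zero in linarith)+
  next
    case False
    have "0 \<le> pi * r" "pi * r \<le> pi * (1 - frac y)" "pi * (1 - frac y) \<le> pi / 2"
      using frac assms False by auto
    then have "sin (pi * r) \<le> sin (pi * (1 - frac y))"
      by (intro sin_monotone_2pi_le) (use pi_gt_zero in linarith)+
    then show ?thesis
      by (simp add: right_diff_distrib)
  qed
  ultimately show ?thesis by simp
qed

lemma norm_dirichlet_sum_le:
  assumes "cis2pi y \<noteq> 1"
  shows "norm (\<Sum>m\<in>{- int N..int N - 1}. cis2pi (of_int m * y)) \<le> 2 / norm (1 - cis2pi y)"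
proof -
  have "(\<Sum>m\<in>{- int N..int N - 1}. cis2pi (of_int m * y)) = (\<Sum>i<2 * N. cis2pi (- (real N * y)) * cis2pi y ^ i)"
    by (rule sum.reindex_bij_witness[of _ "\<lambda>i. int i - int N" "\<lambda>m. nat (m + int N)"])
       (auto simp: cis2pi_power cis2pi_add[symmetric] algebra_simps)
  also have "\<dots> = cis2pi (- (real N * y)) * ((1 - cis2pi y ^ (2 * N)) / (1 - cis2pi y))"
    using assms by (simp add: sum_distrib_left[symmetric] sum_gp_strict)
  finally show ?thesis
    using assms norm_triangle_ineq4[of 1 "cis2pi y ^ (2 * N)"]
    by (simp add: norm_mult norm_divide norm_power divide_right_mono)
qed

lemma norm_sampling_fun_le_if_far_from_Ints:
  assumes "N > 0" and "0 < r" and "r \<le> 1 / 2" and far: "\<not> (\<exists>k::int. \<bar>y - of_int k\<bar> \<le> r)"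
  shows "norm (sampling_fun N y) \<le> 1 / (2 * real N * sin (pi * r))"
proof -
  have "sin (pi * r) > 0"
    using assms by (intro sin_gt_zero) auto
  moreover have "2 * sin (pi * r) \<le> norm (1 - cis2pi y)"
    using abs_sin_pi_ge_if_far_from_Ints[OF assms(2-4)] by (simp add: norm_1_minus_cis2pi)
  ultimately have "cis2pi y \<noteq> 1" and le: "2 / norm (1 - cis2pi y) \<le> 1 / sin (pi * r)"
    by (auto simp: divide_simps)
  have "norm (sampling_fun N y) = norm (\<Sum>m\<in>{- int N..int N - 1}. cis2pi (of_int m * y)) / (2 * real N)"
    unfolding sampling_fun_def exp_eq_cis2pi by (simp add: norm_mult norm_divide)
  also have "\<dots> \<le> (1 / sin (pi * r)) / (2 * real N)"
    using norm_dirichlet_sum_le[OF \<open>cis2pi y \<noteq> 1\<close>, of N] le by (intro divide_right_mono) auto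
  finally show ?thesis by (simp add: mult.commute)
qed

definition alias_freq :: "nat \<Rightarrow> int \<Rightarrow> int" where
  "alias_freq N d = (d + int N) mod (2 * int N) - int N"

lemma alias_freq_mem:
  assumes "N > 0"
  shows "alias_freq N d \<in> {- int N..int N - 1}"
  using assms pos_mod_bound[of "2 * int N" "d + int N"] pos_mod_sign[of "2 * int N" "d + int N"]
  by (auto simp: alias_freq_def)

lemma alias_freq_eq_self: "d \<in> {- int N..int N - 1} \<Longrightarrow> alias_freq N d = d"
  by (simp add: alias_freq_def)

lemma dvd_diff_iff_eq_alias_freq:
  assumes "N > 0" and "m \<in> {- int N..int N - 1}"
  shows "2 * int N dvd d - m \<longleftrightarrow> m = alias_freq N d"
proof
  assume "2 * int N dvd d - m"
  then have "(d + int N) mod (2 * int N) = (m + int N) mod (2 * int N)"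
    by (metis add_diff_cancel_right mod_eq_dvd_iff)
  then show "m = alias_freq N d"
    using assms by (simp add: alias_freq_def)
next
  assume "m = alias_freq N d"
  then have "d - m = (d + int N) - (d + int N) mod (2 * int N)"
    by (simp add: alias_freq_def)
  also have "\<dots> = 2 * int N * ((d + int N) div (2 * int N))"
    by (rule minus_mod_eq_mult_div)
  finally show "2 * int N dvd d - m"
    by simp
qed

lemma sum_cis2pi_roots_of_unity:
  assumes "n > 0"
  shows "(\<Sum>j<n. cis2pi (of_int d * real j / real n)) = (if int n dvd d then of_nat n else 0)"
proof -
  define w where "w = cis2pi (of_int d / real n)"
  have powers: "cis2pi (of_int d * real j / real n) = w ^ j" for j
    by (simp add: w_def cis2pi_power field_simps)
  have "w = 1 \<longleftrightarrow> int n dvd d"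
  proof -
    have "w = 1 \<longleftrightarrow> of_int d / real n \<in> \<int>"
      by (simp add: w_def cis2pi_eq_1_iff)
    also have "\<dots> \<longleftrightarrow> int n dvd d"
    proof
      assume "of_int d / real n \<in> \<int>"
      then obtain q where "of_int d / real n = of_int q"
        by (elim Ints_cases)
      then have "real_of_int d = real_of_int (int n * q)"
        using assms by (simp add: divide_eq_eq)
      then have "d = int n * q"
        by (rule of_int_eq_iff[THEN iffD1])
      then show "int n dvd d" ..
    next
      assume "int n dvd d"
      then obtain q where "d = int n * q" ..
      then show "of_int d / real n \<in> \<int>"
        using assms by simp
    qed
    finally show ?thesis .
  qed
  moreover have "w ^ n = 1"
    using assms by (simp add: w_def cis2pi_power)
  ultimately show ?thesis
    by (simp add: powers sum_gp_strict)
qed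

lemma sampled_cis2pi_product:
  assumes "N > 0"
  shows "(\<Sum>j<2 * N. cis2pi (of_int k * (real j / (2 * real N))) * sampling_fun N (x - real j / (2 * real N))
            * cis2pi (of_int n * (x - real j / (2 * real N))))
         = cis2pi (of_int (alias_freq N (k - n) + n) * x)"
proof -
  let ?B = "{- int N..int N - 1}"
  let ?t = "\<lambda>j::nat. real j / (2 * real N)"
  have product: "cis2pi (of_int k * ?t j) * cis2pi (of_int m * (x - ?t j)) * cis2pi (of_int n * (x - ?t j))
      = cis2pi (of_int (m + n) * x) * cis2pi (of_int (k - n - m) * real j / real (2 * N))" for j m
  proof -
    have "of_int k * ?t j + of_int m * (x - ?t j) + of_int n * (x - ?t j)
        = of_int (m + n) * x + of_int (k - n - m) * real j / real (2 * N)"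
      using assms by (simp add: field_simps)
    then show ?thesis
      by (metis cis2pi_add)
  qed
  have "(\<Sum>j<2 * N. cis2pi (of_int k * ?t j) * sampling_fun N (x - ?t j) * cis2pi (of_int n * (x - ?t j)))
      = (\<Sum>j<2 * N. \<Sum>m\<in>?B. (1 / (2 * of_nat N))
           * (cis2pi (of_int (m + n) * x) * cis2pi (of_int (k - n - m) * real j / real (2 * N))))"
  proof (rule sum.cong[OF refl])
    fix j
    have "cis2pi (of_int k * ?t j) * sampling_fun N (x - ?t j) * cis2pi (of_int n * (x - ?t j))
        = (\<Sum>m\<in>?B. (1 / (2 * of_nat N))
             * (cis2pi (of_int k * ?t j) * cis2pi (of_int m * (x - ?t j)) * cis2pi (of_int n * (x - ?t j))))"
      unfolding sampling_fun_def exp_eq_cis2pi by (simp add: sum_distrib_left sum_distrib_right mult_ac)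
    then show "cis2pi (of_int k * ?t j) * sampling_fun N (x - ?t j) * cis2pi (of_int n * (x - ?t j))
        = (\<Sum>m\<in>?B. (1 / (2 * of_nat N))
             * (cis2pi (of_int (m + n) * x) * cis2pi (of_int (k - n - m) * real j / real (2 * N))))"
      by (simp only: product)
  qed
  also have "\<dots> = (\<Sum>m\<in>?B. (1 / (2 * of_nat N)) * cis2pi (of_int (m + n) * x)
                    * (\<Sum>j<2 * N. cis2pi (of_int (k - n - m) * real j / real (2 * N))))"
    by (subst sum.swap) (simp add: sum_distrib_left mult.assoc)
  also have "\<dots> = (\<Sum>m\<in>?B. if m = alias_freq N (k - n) then cis2pi (of_int (m + n) * x) else 0)"
  proof (rule sum.cong[OF refl])
    fix m assume m: "m \<in> ?B"
    have roots: "(\<Sum>j<2 * N. cis2pi (of_int (k - n - m) * real j / real (2 * N)))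
        = (if int (2 * N) dvd k - n - m then of_nat (2 * N) else 0)"
      using assms by (intro sum_cis2pi_roots_of_unity) simp
    have "int (2 * N) dvd k - n - m \<longleftrightarrow> m = alias_freq N (k - n)"
      using dvd_diff_iff_eq_alias_freq[OF assms m, of "k - n"] by simp
    then show "(1 / (2 * of_nat N)) * cis2pi (of_int (m + n) * x)
                 * (\<Sum>j<2 * N. cis2pi (of_int (k - n - m) * real j / real (2 * N)))
        = (if m = alias_freq N (k - n) then cis2pi (of_int (m + n) * x) else 0)"
      unfolding roots using assms by simp
  qed
  also have "\<dots> = cis2pi (of_int (alias_freq N (k - n) + n) * x)"
    using alias_freq_mem[OF assms] by simp
  finally show ?thesis .
qed

lemma has_sum_sum:
  fixes f :: "'j \<Rightarrow> 'a \<Rightarrow> 'b::topological_comm_monoid_add"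
  assumes "finite J" and "\<And>j. j \<in> J \<Longrightarrow> (f j has_sum S j) A"
  shows "((\<lambda>n. \<Sum>j\<in>J. f j n) has_sum (\<Sum>j\<in>J. S j)) A"
  using assms by (induction J rule: finite_induct) (simp_all add: has_sum_add)

section \<open>The reconstruction error\<close>

lemma has_sum_sampled_gauss_series:
  assumes "\<sigma> > 0" and "N > 0"
  shows "((\<lambda>n. complex_of_real (gauss_coeff \<sigma> n) * cis2pi (of_int (alias_freq N (k - n) + n) * x)) has_sum
           (\<Sum>j<2 * N. cis2pi (of_int k * (real j / (2 * real N))) * sampling_fun N (x - real j / (2 * real N))
              * gauss_series \<sigma> (x - real j / (2 * real N)))) UNIV"
proof -
  let ?t = "\<lambda>j::nat. real j / (2 * real N)"
  define q where "q n = complex_of_real (gauss_coeff \<sigma> n)" for n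
  define a where "a j = cis2pi (of_int k * ?t j) * sampling_fun N (x - ?t j)" for j
  have "((\<lambda>n. \<Sum>j<2 * N. a j * (q n * cis2pi (of_int n * (x - ?t j))))
          has_sum (\<Sum>j<2 * N. a j * gauss_series \<sigma> (x - ?t j))) UNIV"
    unfolding q_def by (intro has_sum_sum has_sum_cmult_right has_sum_gauss_series assms) simp
  moreover have "(\<Sum>j<2 * N. a j * (q n * cis2pi (of_int n * (x - ?t j))))
      = q n * cis2pi (of_int (alias_freq N (k - n) + n) * x)" for n
  proof -
    have "(\<Sum>j<2 * N. a j * (q n * cis2pi (of_int n * (x - ?t j))))
        = q n * (\<Sum>j<2 * N. a j * cis2pi (of_int n * (x - ?t j)))"
      by (simp add: sum_distrib_left mult_ac)
    then show ?thesis
      unfolding a_def sampled_cis2pi_product[OF assms(2), where k = k and n = n and x = x, symmetric] .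
  qed
  ultimately show ?thesis
    by (simp add: q_def a_def)
qed

lemma periodic_gauss_sampling_cis2pi_error:
  fixes k :: int and N :: nat and R :: real
  assumes "\<sigma> > 0" and "N > 0"
    and no_aliasing: "\<And>n::int. \<bar>of_int n\<bar> < R \<Longrightarrow> k - n \<in> {- int N..int N - 1}"
  shows "norm (cis2pi (of_int k * x)
            - (\<Sum>j<2 * N. cis2pi (of_int k * (real j / (2 * real N))) * sampling_fun N (x - real j / (2 * real N))
                 * periodic_gauss \<sigma> (x - real j / (2 * real N))))
         \<le> 2 * (\<Sum>\<^sub>\<infinity>n\<in>{n::int. R \<le> \<bar>of_int n\<bar>}. gauss_coeff \<sigma> n)"
proof -
  let ?t = "\<lambda>j::nat. real j / (2 * real N)"
  let ?A = "{n::int. R \<le> \<bar>of_int n\<bar>}"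
  define q where "q n = complex_of_real (gauss_coeff \<sigma> n)" for n
  define Q where "Q = infsum (gauss_coeff \<sigma>) UNIV"
  define V where "V n = cis2pi (of_int (alias_freq N (k - n) + n) * x)" for n
  define D where "D = (\<Sum>j<2 * N. cis2pi (of_int k * ?t j) * sampling_fun N (x - ?t j) * gauss_series \<sigma> (x - ?t j))"
  have "Q \<ge> 1"
    unfolding Q_def by (rule infsum_gauss_coeff_ge_1[OF assms(1)])
  have sampled: "((\<lambda>n. q n * V n) has_sum D) UNIV"
    unfolding q_def V_def D_def by (rule has_sum_sampled_gauss_series[OF assms(1,2)])
  have exact: "((\<lambda>n. q n * cis2pi (of_int k * x)) has_sum (complex_of_real Q * cis2pi (of_int k * x))) UNIV"
    unfolding q_def Q_def
    by (intro has_sum_cmult_left has_sum_of_real has_sum_infsum summable_on_gauss_coeff assms)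
  have "((\<lambda>n. q n * (cis2pi (of_int k * x) - V n))
      has_sum (complex_of_real Q * cis2pi (of_int k * x) - D)) UNIV"
    using has_sum_add[OF exact has_sum_uminusI[OF sampled]] by (simp add: right_diff_distrib)
  moreover have "V n = cis2pi (of_int k * x)" if "n \<notin> ?A" for n
    using no_aliasing[of n] that by (simp add: V_def alias_freq_eq_self)
  ultimately have diff_sum: "((\<lambda>n. q n * (cis2pi (of_int k * x) - V n))
      has_sum (complex_of_real Q * cis2pi (of_int k * x) - D)) ?A"
    by (subst (asm) has_sum_cong_neutral[where T = ?A]) auto
  have bound: "norm (complex_of_real Q * cis2pi (of_int k * x) - D) \<le> (\<Sum>\<^sub>\<infinity>n\<in>?A. 2 * gauss_coeff \<sigma> n)"
  proof (rule norm_infsum_le[OF diff_sum])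
    show "((\<lambda>n. 2 * gauss_coeff \<sigma> n) has_sum (\<Sum>\<^sub>\<infinity>n\<in>?A. 2 * gauss_coeff \<sigma> n)) ?A"
      using summable_on_gauss_coeff[OF assms(1)]
      by (intro has_sum_infsum summable_on_cmult_right) (auto intro: summable_on_subset_banach)
    show "norm (q n * (cis2pi (of_int k * x) - V n)) \<le> 2 * gauss_coeff \<sigma> n" for n
      using norm_triangle_ineq4[of "cis2pi (of_int k * x)" "V n"] gauss_coeff_pos[of \<sigma> n]
      by (simp add: q_def V_def norm_mult mult_left_mono)
  qed
  have "(\<Sum>j<2 * N. cis2pi (of_int k * ?t j) * sampling_fun N (x - ?t j) * periodic_gauss \<sigma> (x - ?t j))
      = D / complex_of_real Q"
    by (simp add: D_def Q_def periodic_gauss_def gauss_series_0[OF assms(1)] sum_divide_distrib)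
  then have "norm (cis2pi (of_int k * x)
      - (\<Sum>j<2 * N. cis2pi (of_int k * ?t j) * sampling_fun N (x - ?t j) * periodic_gauss \<sigma> (x - ?t j)))
      = norm (complex_of_real Q * cis2pi (of_int k * x) - D) / Q"
  proof -
    have "cis2pi (of_int k * x) - D / complex_of_real Q
        = (complex_of_real Q * cis2pi (of_int k * x) - D) / complex_of_real Q"
      using \<open>Q \<ge> 1\<close> by (simp add: field_simps)
    with \<open>Q \<ge> 1\<close> \<open>_ = D / complex_of_real Q\<close> show ?thesis
      by (simp add: norm_divide)
  qed
  also have "\<dots> \<le> norm (complex_of_real Q * cis2pi (of_int k * x) - D)"
    using \<open>Q \<ge> 1\<close> by (simp add: divide_le_eq mult_le_cancel_left1)
  also have "\<dots> \<le> 2 * (\<Sum>\<^sub>\<infinity>n\<in>?A. gauss_coeff \<sigma> n)"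
    using bound by (simp add: infsum_cmult_right')
  finally show ?thesis .
qed

lemma trunc_gauss_sampling_cis2pi_error:
  fixes k :: int and N :: nat and R :: real
  assumes "\<sigma> > 0" and "N > 0" and "0 < r" and "r \<le> 1 / 2"
    and no_aliasing: "\<And>n::int. \<bar>of_int n\<bar> < R \<Longrightarrow> k - n \<in> {- int N..int N - 1}"
  shows "norm (cis2pi (of_int k * x)
            - (\<Sum>j<2 * N. sampling_fun N (x - real j / (2 * real N)) * trunc_gauss r \<sigma> (x - real j / (2 * real N))
                 * cis2pi (of_int k * (real j / (2 * real N)))))
         \<le> 2 * (\<Sum>\<^sub>\<infinity>n\<in>{n::int. R \<le> \<bar>of_int n\<bar>}. gauss_coeff \<sigma> n)
           + 4 * exp (- (2 * pi\<^sup>2 * \<sigma>\<^sup>2) * r\<^sup>2) / (1 - exp (- 2 * (2 * pi\<^sup>2 * \<sigma>\<^sup>2) * r)) / sin (pi * r)"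
proof -
  let ?t = "\<lambda>j::nat. real j / (2 * real N)"
  define B where "B = 4 * exp (- (2 * pi\<^sup>2 * \<sigma>\<^sup>2) * r\<^sup>2) / (1 - exp (- 2 * (2 * pi\<^sup>2 * \<sigma>\<^sup>2) * r))"
  define far where "far y = (if \<exists>k::int. \<bar>y - of_int k\<bar> \<le> r then 0 else periodic_gauss \<sigma> y)" for y
  define W where "W = (\<Sum>j<2 * N. cis2pi (of_int k * ?t j) * sampling_fun N (x - ?t j) * periodic_gauss \<sigma> (x - ?t j))"
  define Z where "Z = (\<Sum>j<2 * N. sampling_fun N (x - ?t j) * far (x - ?t j) * cis2pi (of_int k * ?t j))"
  have "sin (pi * r) > 0"
    using assms by (intro sin_gt_zero) auto
  have far_bound: "norm (sampling_fun N y * far y) \<le> B / (2 * real N * sin (pi * r))" for y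
  proof (cases "\<exists>k::int. \<bar>y - of_int k\<bar> \<le> r")
    case False
    have "norm (sampling_fun N y * far y) = norm (sampling_fun N y) * norm (periodic_gauss \<sigma> y)"
      using False by (simp add: far_def norm_mult)
    also have "\<dots> \<le> (1 / (2 * real N * sin (pi * r))) * B"
      unfolding B_def
      by (intro mult_mono norm_sampling_fun_le_if_far_from_Ints norm_periodic_gauss_far_from_Ints False assms)
         (use \<open>sin (pi * r) > 0\<close> assms in auto)
    finally show ?thesis by simp
  qed (use \<open>sin (pi * r) > 0\<close> assms in \<open>simp add: far_def B_def\<close>)
  have trunc: "trunc_gauss r \<sigma> y = periodic_gauss \<sigma> y - far y" for y
    by (simp add: trunc_gauss_def far_def)
  have split: "(\<Sum>j<2 * N. sampling_fun N (x - ?t j) * trunc_gauss r \<sigma> (x - ?t j) * cis2pi (of_int k * ?t j))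
      = W - Z"
    unfolding W_def Z_def trunc sum_subtractf[symmetric] by (intro sum.cong refl) (simp add: algebra_simps)
  have "norm (cis2pi (of_int k * x)
      - (\<Sum>j<2 * N. sampling_fun N (x - ?t j) * trunc_gauss r \<sigma> (x - ?t j) * cis2pi (of_int k * ?t j)))
      = norm ((cis2pi (of_int k * x) - W) + Z)"
    unfolding split by (simp add: algebra_simps)
  also have "\<dots> \<le> norm (cis2pi (of_int k * x) - W) + norm Z"
    by (rule norm_triangle_ineq)
  also have "norm (cis2pi (of_int k * x) - W) \<le> 2 * (\<Sum>\<^sub>\<infinity>n\<in>{n::int. R \<le> \<bar>of_int n\<bar>}. gauss_coeff \<sigma> n)"
    unfolding W_def by (rule periodic_gauss_sampling_cis2pi_error[OF assms(1,2) no_aliasing])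
  also have "norm Z \<le> (\<Sum>j<2 * N. B / (2 * real N * sin (pi * r)))"
    unfolding Z_def by (rule order_trans[OF norm_sum sum_mono]) (use far_bound in \<open>simp add: norm_mult\<close>)
  also have "\<dots> = B / sin (pi * r)"
    using assms by simp
  finally show ?thesis
    by (simp add: B_def)
qed

lemma norm_smult_vec: "norm ((z::complex) *s (v::complex^'n)) = norm z * norm v"
proof -
  have "norm (z *s v) = L2_set (\<lambda>i. norm z * norm (v $ i)) UNIV"
    unfolding norm_vec_def by (simp add: norm_mult)
  also have "\<dots> = norm z * L2_set (\<lambda>i. norm (v $ i)) UNIV"
    by (rule L2_set_right_distrib[symmetric]) simp
  finally show ?thesis by (simp add: norm_vec_def)
qed

lemma reconstr_trig_poly:
  fixes c :: "int \<Rightarrow> complex^'m"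
  assumes f: "\<And>x. f x = (\<Sum>l\<in>K. cis2pi (of_int l * x) *s c l)"
  shows "reconstr N r \<sigma> f x = (\<Sum>l\<in>K. (\<Sum>j<2 * N. sampling_fun N (x - real j / (2 * real N))
           * trunc_gauss r \<sigma> (x - real j / (2 * real N)) * cis2pi (of_int l * (real j / (2 * real N)))) *s c l)"
  unfolding reconstr_def f
  by (simp add: vec_eq_iff sum_distrib_left sum_distrib_right mult.assoc sum.swap[of _ "{..<2 * N}"])

lemma reconstr_pointwise_error:
  fixes f :: "real \<Rightarrow> complex^'m" and c :: "int \<Rightarrow> complex^'m"
  assumes f: "\<And>x. f x = (\<Sum>l\<in>{- int M..int M - 1}. cis2pi (of_int l * x) *s c l)"
    and "M < N" and "\<sigma> > 0" and "0 < r" and "r \<le> 1 / 2"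
  shows "norm (f x - reconstr N r \<sigma> f x) \<le> (\<Sum>l\<in>{- int M..int M - 1}. norm (c l)) *
     (2 * (\<Sum>\<^sub>\<infinity>n\<in>{n::int. real (N - M) \<le> \<bar>of_int n\<bar>}. gauss_coeff \<sigma> n)
      + 4 * exp (- (2 * pi\<^sup>2 * \<sigma>\<^sup>2) * r\<^sup>2) / (1 - exp (- 2 * (2 * pi\<^sup>2 * \<sigma>\<^sup>2) * r)) / sin (pi * r))"
    (is "_ \<le> _ * ?E")
proof -
  let ?K = "{- int M..int M - 1}"
  let ?t = "\<lambda>j::nat. real j / (2 * real N)"
  define err where "err l = cis2pi (of_int l * x)
      - (\<Sum>j<2 * N. sampling_fun N (x - ?t j) * trunc_gauss r \<sigma> (x - ?t j) * cis2pi (of_int l * ?t j))" for l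
  have "f x - reconstr N r \<sigma> f x = (\<Sum>l\<in>?K. err l *s c l)"
    unfolding reconstr_trig_poly[OF f] f[of x] err_def
    by (simp add: vec_eq_iff sum_subtractf left_diff_distrib)
  then have "norm (f x - reconstr N r \<sigma> f x) \<le> (\<Sum>l\<in>?K. norm (err l) * norm (c l))"
    by (simp add: norm_smult_vec order_trans[OF norm_sum])
  also have "\<dots> \<le> (\<Sum>l\<in>?K. ?E * norm (c l))"
  proof (intro sum_mono mult_right_mono)
    fix l assume "l \<in> ?K"
    \<comment> \<open>For \<open>|n| < N - M\<close> the frequency \<open>l - n\<close> stays in \<open>B\<^sub>N\<close>: no aliasing occurs.\<close>
    then show "norm (err l) \<le> ?E"
      unfolding err_def using assms
      by (intro trunc_gauss_sampling_cis2pi_error) auto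
  qed simp
  finally show ?thesis
    by (simp add: sum_distrib_right mult.commute)
qed

lemma square_integral_le_integral_square:
  fixes g :: "real \<Rightarrow> real"
  assumes "continuous_on {0..1} g"
  shows "(integral {0..1} g)\<^sup>2 \<le> integral {0..1} (\<lambda>x. (g x)\<^sup>2)"
proof -
  define A where "A = integral {0..1} g"
  have integrable: "(\<lambda>x. (g x)\<^sup>2) integrable_on {0..1}" "(\<lambda>x. 2 * A * g x - A\<^sup>2) integrable_on {0..1}"
    using assms by (auto intro!: integrable_continuous_real continuous_intros)
  have "0 \<le> integral {0..1} (\<lambda>x. (g x - A)\<^sup>2)"
    using assms by (intro integral_nonneg integrable_continuous_real continuous_intros) auto
  also have "\<dots> = integral {0..1} (\<lambda>x. (g x)\<^sup>2 - (2 * A * g x - A\<^sup>2))"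
    by (simp add: power2_eq_square algebra_simps)
  also have "\<dots> = integral {0..1} (\<lambda>x. (g x)\<^sup>2) - integral {0..1} (\<lambda>x. 2 * A * g x - A\<^sup>2)"
    by (rule integral_diff[OF integrable])
  also have "integral {0..1} (\<lambda>x. 2 * A * g x - A\<^sup>2) = 2 * A * integral {0..1} g - A\<^sup>2"
    using assms by (subst integral_diff) (auto intro!: integrable_continuous_real continuous_intros)
  also have "2 * A * integral {0..1} g - A\<^sup>2 = A\<^sup>2"
    by (simp add: A_def power2_eq_square)
  finally show ?thesis
    by (simp add: A_def)
qed

lemma norm_coeff_le_L2norm01:
  fixes f :: "real \<Rightarrow> complex^'m" and c :: "int \<Rightarrow> complex^'m"
  assumes f: "\<And>x. f x = (\<Sum>l\<in>K. cis2pi (of_int l * x) *s c l)" and "finite K" and "k \<in> K"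
  shows "norm (c k) \<le> L2norm01 f"
proof -
  have f_cont: "continuous_on S f" for S
    unfolding f[abs_def] vector_scalar_mult_def
    by (intro continuous_on_vec_lambda continuous_intros)
  define g where "g x = cis2pi (- (of_int k * x)) *s f x" for x
  have g_cont: "continuous_on {0..1} g"
    unfolding g_def vector_scalar_mult_def
    by (intro continuous_on_vec_lambda continuous_intros continuous_on_compose2[OF f_cont]) auto
  have "c k = integral {0..1} g"
  proof (subst vec_eq_iff, intro allI)
    fix i
    have "integral {0..1} g $ i = integral {0..1} (\<lambda>x. \<Sum>l\<in>K. c l $ i * cis2pi (of_int (l - k) * x))"
      using integral_linear[OF integrable_continuous_real[OF g_cont] bounded_linear_vec_nth[of i]]
      by (simp add: o_def g_def f sum_distrib_left cis2pi_add[symmetric] algebra_simps)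
    also have "\<dots> = (\<Sum>l\<in>K. c l $ i * integral {0..1} (\<lambda>x. cis2pi (of_int (l - k) * x)))"
      using \<open>finite K\<close> by (subst integral_sum) (auto intro!: integrable_continuous_real continuous_intros)
    also have "\<dots> = (\<Sum>l\<in>K. if l = k then c l $ i else 0)"
      by (intro sum.cong refl) (simp only: integral_cis2pi_int, simp)
    also have "\<dots> = c k $ i"
      using \<open>finite K\<close> \<open>k \<in> K\<close> by simp
    finally show "c k $ i = integral {0..1} g $ i" ..
  qed
  also have "norm \<dots> \<le> integral {0..1} (\<lambda>x. norm (f x))"
    using g_cont f_cont
    by (intro integral_norm_bound_integral integrable_continuous_real continuous_intros)
       (auto simp: g_def norm_smult_vec)
  also have "\<dots> \<le> sqrt (integral {0..1} (\<lambda>x. (norm (f x))\<^sup>2))"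
    using square_integral_le_integral_square[of "\<lambda>x. norm (f x)"] f_cont
    by (simp add: real_le_rsqrt continuous_on_norm)
  finally show ?thesis
    unfolding L2norm01_def .
qed

lemma L2norm01_le_sup:
  fixes g :: "real \<Rightarrow> complex^'m"
  assumes "B \<ge> 0" and "\<And>x. x \<in> {0..1} \<Longrightarrow> norm (g x) \<le> B"
  shows "L2norm01 g \<le> B"
proof (cases "(\<lambda>x. (norm (g x))\<^sup>2) integrable_on {0..1}")
  case True
  have "integral {0..1} (\<lambda>x. (norm (g x))\<^sup>2) \<le> integral {0..1} (\<lambda>x::real. B\<^sup>2)"
    using assms by (intro integral_le[OF True]) (auto intro!: power_mono)
  then show ?thesis
    using assms(1) real_sqrt_le_mono[of _ "B\<^sup>2"] by (simp add: L2norm01_def)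
next
  case False
  then show ?thesis
    using assms(1) by (simp add: L2norm01_def not_integrable_integral)
qed

lemma L2norm01_nonneg: "L2norm01 g \<ge> 0"
  unfolding L2norm01_def
  by (cases "(\<lambda>x. (norm (g x))\<^sup>2) integrable_on {0..1}")
     (auto intro!: integral_nonneg simp: not_integrable_integral)

lemma inverse_one_minus_exp_neg_le:
  fixes u :: real
  assumes "u > 0"
  shows "1 / (1 - exp (- u)) \<le> 1 + 1 / u"
proof -
  have "exp (- u) \<le> 1 / (1 + u)"
    using exp_ge_add_one_self[of u] assms by (simp add: exp_minus field_simps)
  then have "u / (1 + u) \<le> 1 - exp (- u)"
    using assms by (simp add: field_simps)
  moreover have "1 - exp (- u) > 0"
    using assms by simp
  ultimately have "1 / (1 - exp (- u)) \<le> 1 / (u / (1 + u))"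
    using assms by (intro divide_left_mono) auto
  then show ?thesis
    using assms by (simp add: field_simps)
qed

lemma pi_squared_gt_9: "pi\<^sup>2 > 9"
  using mult_strict_mono[OF pi_gt3 pi_gt3] by (simp add: power2_eq_square)

lemma aliasing_term_le:
  fixes \<beta> L :: real
  assumes "L \<ge> 1"
  defines "\<sigma> \<equiv> L powr \<beta> / (sqrt 6 * pi)"
  shows "8 * exp (- L\<^sup>2 / (2 * \<sigma>\<^sup>2)) / (1 - exp (- L / \<sigma>\<^sup>2))
           \<le> 16 * (exp (- 3 * pi\<^sup>2 * L powr (2 * (1 - \<beta>))) * max 1 (L powr (2 * \<beta> - 1)))"
proof -
  have "L > 0" using assms by simp
  have "(L powr \<beta>)\<^sup>2 = L powr (2 * \<beta>)"
    using \<open>L > 0\<close> powr_power[of L \<beta> 2] by simp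
  then have \<sigma>2: "\<sigma>\<^sup>2 = L powr (2 * \<beta>) / (6 * pi\<^sup>2)"
    unfolding \<sigma>_def by (simp add: power_divide power_mult_distrib)
  have "L powr (2 * (1 - \<beta>)) = L powr 2 / L powr (2 * \<beta>)"
    by (simp add: powr_diff[symmetric] algebra_simps)
  moreover have "L\<^sup>2 = L powr 2"
    using \<open>L > 0\<close> powr_realpow[of L 2] by simp
  ultimately have exponent: "L\<^sup>2 / (2 * \<sigma>\<^sup>2) = 3 * pi\<^sup>2 * L powr (2 * (1 - \<beta>))"
    unfolding \<sigma>2 by (simp add: field_simps)
  define u where "u = L / \<sigma>\<^sup>2"
  have "u > 0"
    using \<open>L > 0\<close> by (simp add: u_def \<sigma>2)
  have "L powr (2 * \<beta> - 1) = L powr (2 * \<beta>) / L powr 1"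
    by (rule powr_diff)
  then have "1 / u = L powr (2 * \<beta> - 1) / (6 * pi\<^sup>2)"
    unfolding u_def \<sigma>2 using \<open>L > 0\<close> by (simp add: field_simps)
  also have "\<dots> \<le> L powr (2 * \<beta> - 1)"
    using pi_squared_gt_9 mult_left_mono[of 1 "6 * pi\<^sup>2" "L powr (2 * \<beta> - 1)"] by (simp add: divide_le_eq)
  finally have "1 / (1 - exp (- u)) \<le> 2 * max 1 (L powr (2 * \<beta> - 1))"
    using inverse_one_minus_exp_neg_le[OF \<open>u > 0\<close>] by linarith
  then have "exp (- (L\<^sup>2 / (2 * \<sigma>\<^sup>2))) * (1 / (1 - exp (- u)))
      \<le> exp (- (3 * pi\<^sup>2 * L powr (2 * (1 - \<beta>)))) * (2 * max 1 (L powr (2 * \<beta> - 1)))"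
    unfolding exponent by (intro mult_left_mono) auto
  then show ?thesis
    by (simp add: u_def)
qed

lemma truncation_term_le:
  fixes \<alpha> \<beta> L :: real
  assumes "0 < \<alpha>" and "\<alpha> < \<beta>" and "L \<ge> 1" and L_large: "3 * pi\<^sup>2 \<le> L powr \<alpha>"
  defines "\<sigma> \<equiv> L powr \<beta> / (sqrt 6 * pi)" and "r \<equiv> 3 * pi / L powr \<alpha>"
  shows "4 * exp (- (2 * pi\<^sup>2 * \<sigma>\<^sup>2) * r\<^sup>2) / (1 - exp (- 2 * (2 * pi\<^sup>2 * \<sigma>\<^sup>2) * r)) / sin (pi * r)
           \<le> L powr (\<alpha> + \<beta>) * exp (- 3 * pi\<^sup>2 * L powr (2 * (\<beta> - \<alpha>)))"
proof -
  define a where "a = 2 * pi\<^sup>2 * \<sigma>\<^sup>2"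
  have "L > 0" "L powr \<alpha> > 0" using assms by auto
  have "(L powr \<beta>)\<^sup>2 = L powr (2 * \<beta>)" "(L powr \<alpha>)\<^sup>2 = L powr (2 * \<alpha>)"
    using \<open>L > 0\<close> powr_power[of L _ 2] by simp_all
  then have a: "a = L powr (2 * \<beta>) / 3" and r2: "r\<^sup>2 = 9 * pi\<^sup>2 / L powr (2 * \<alpha>)"
    by (simp_all add: a_def \<sigma>_def r_def power_divide power_mult_distrib)
  have "L powr (2 * (\<beta> - \<alpha>)) = L powr (2 * \<beta>) / L powr (2 * \<alpha>)"
    by (simp add: powr_diff[symmetric] algebra_simps)
  then have exponent: "a * r\<^sup>2 = 3 * pi\<^sup>2 * L powr (2 * (\<beta> - \<alpha>))"
    by (simp add: a r2)
  have "L powr \<alpha> \<le> L powr (2 * \<beta>)"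
    using assms by (intro powr_mono) auto
  then have "2 * pi \<le> 2 * a * r"
    using \<open>L powr \<alpha> > 0\<close> by (simp add: a r_def field_simps)
  then have "exp (- 2 * a * r) \<le> exp (- 1)"
    using pi_gt3 by simp
  also have "exp (- 1) \<le> (1 / 2 :: real)"
    using exp_ge_add_one_self[of 1] by (simp add: exp_minus field_simps)
  finally have "exp (- 2 * a * r) \<le> 1 / 2" .
  moreover have "4 / (1 - e) \<le> 8" if "e \<le> 1 / 2" for e :: real
    using that by (simp add: divide_le_eq)
  ultimately have geometric: "4 / (1 - exp (- 2 * a * r)) \<le> 8"
    by blast
  have "pi * r = 3 * pi\<^sup>2 / L powr \<alpha>"
    by (simp add: r_def power2_eq_square)
  then have "0 < pi * r" "pi * r \<le> 1"
    using L_large \<open>L powr \<alpha> > 0\<close> by auto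
  then have sin: "pi * r / 2 \<le> sin (pi * r)"
    by (intro sin_ge_half_self) auto
  have "4 * exp (- a * r\<^sup>2) / (1 - exp (- 2 * a * r)) = exp (- a * r\<^sup>2) * (4 / (1 - exp (- 2 * a * r)))"
    by simp
  also have "\<dots> \<le> exp (- a * r\<^sup>2) * 8"
    by (rule mult_left_mono[OF geometric]) simp
  finally have numerator: "4 * exp (- a * r\<^sup>2) / (1 - exp (- 2 * a * r)) \<le> exp (- a * r\<^sup>2) * 8" .
  have "4 * exp (- a * r\<^sup>2) / (1 - exp (- 2 * a * r)) / sin (pi * r)
      \<le> exp (- a * r\<^sup>2) * 8 / (pi * r / 2)"
    by (rule frac_le[OF _ numerator]) (use sin \<open>0 < pi * r\<close> in auto)
  also have "\<dots> = exp (- a * r\<^sup>2) * (16 / (3 * pi\<^sup>2)) * L powr \<alpha>"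
    using \<open>L powr \<alpha> > 0\<close> by (simp add: r_def field_simps power2_eq_square)
  also have "\<dots> \<le> exp (- a * r\<^sup>2) * 1 * L powr (\<alpha> + \<beta>)"
    using pi_squared_gt_9 assms by (intro mult_mono powr_mono) auto
  also have "\<dots> = L powr (\<alpha> + \<beta>) * exp (- 3 * pi\<^sup>2 * L powr (2 * (\<beta> - \<alpha>)))"
    using exponent by simp
  finally show ?thesis
    unfolding a_def .
qed

lemma err_tilde_nonneg: "err_tilde N M \<alpha> \<beta> \<ge> 0"
  unfolding err_tilde_def by (intro add_nonneg_nonneg mult_nonneg_nonneg) auto

lemma error_terms_le_err_tilde:
  fixes \<alpha> \<beta> :: real
  assumes "0 < \<alpha>" and "\<alpha> < \<beta>" and "M < N" and large: "3 * pi\<^sup>2 \<le> (real N - real M) powr \<alpha>"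
  defines "\<sigma> \<equiv> (real N - real M) powr \<beta> / (sqrt 6 * pi)" and "r \<equiv> 3 * pi / (real N - real M) powr \<alpha>"
  shows "2 * (\<Sum>\<^sub>\<infinity>n\<in>{n::int. real (N - M) \<le> \<bar>of_int n\<bar>}. gauss_coeff \<sigma> n)
           + 4 * exp (- (2 * pi\<^sup>2 * \<sigma>\<^sup>2) * r\<^sup>2) / (1 - exp (- 2 * (2 * pi\<^sup>2 * \<sigma>\<^sup>2) * r)) / sin (pi * r)
         \<le> 16 * err_tilde N M \<alpha> \<beta>"
proof -
  define L where "L = real N - real M"
  have "L \<ge> 1" "real (N - M) = L"
    using \<open>M < N\<close> by (auto simp: L_def)
  then have "\<sigma> > 0"
    by (simp add: \<sigma>_def L_def)
  have "(\<Sum>\<^sub>\<infinity>n\<in>{n::int. L \<le> \<bar>of_int n\<bar>}. gauss_coeff \<sigma> n)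
      \<le> 4 * exp (- L\<^sup>2 / (2 * \<sigma>\<^sup>2)) / (1 - exp (- L / \<sigma>\<^sup>2))"
    using \<open>L \<ge> 1\<close> by (intro gauss_coeff_tail \<open>\<sigma> > 0\<close>) simp
  then have "2 * (\<Sum>\<^sub>\<infinity>n\<in>{n::int. L \<le> \<bar>of_int n\<bar>}. gauss_coeff \<sigma> n)
      \<le> 2 * (4 * exp (- L\<^sup>2 / (2 * \<sigma>\<^sup>2)) / (1 - exp (- L / \<sigma>\<^sup>2)))"
    by linarith
  also have "\<dots> = 8 * exp (- L\<^sup>2 / (2 * \<sigma>\<^sup>2)) / (1 - exp (- L / \<sigma>\<^sup>2))"
    by simp
  also have "\<dots> \<le> 16 * (exp (- 3 * pi\<^sup>2 * L powr (2 * (1 - \<beta>))) * max 1 (L powr (2 * \<beta> - 1)))"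
    unfolding \<sigma>_def L_def[symmetric] by (rule aliasing_term_le[OF \<open>L \<ge> 1\<close>])
  finally have sampling: "2 * (\<Sum>\<^sub>\<infinity>n\<in>{n::int. L \<le> \<bar>of_int n\<bar>}. gauss_coeff \<sigma> n)
      \<le> 16 * (exp (- 3 * pi\<^sup>2 * L powr (2 * (1 - \<beta>))) * max 1 (L powr (2 * \<beta> - 1)))" .
  have truncation: "4 * exp (- (2 * pi\<^sup>2 * \<sigma>\<^sup>2) * r\<^sup>2) / (1 - exp (- 2 * (2 * pi\<^sup>2 * \<sigma>\<^sup>2) * r)) / sin (pi * r)
      \<le> L powr (\<alpha> + \<beta>) * exp (- 3 * pi\<^sup>2 * L powr (2 * (\<beta> - \<alpha>)))"
    unfolding \<sigma>_def r_def L_def[symmetric]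
    by (rule truncation_term_le[OF \<open>0 < \<alpha>\<close> \<open>\<alpha> < \<beta>\<close> \<open>L \<ge> 1\<close>]) (use large in \<open>simp add: L_def\<close>)
  show ?thesis
    unfolding err_tilde_def L_def[symmetric] \<open>real (N - M) = L\<close>
    by (rule order_trans[OF add_mono[OF sampling truncation]]) (simp add: distrib_left)
qed

lemma reconstr_error_le_err_tilde:
  fixes f :: "real \<Rightarrow> complex^'m" and c :: "int \<Rightarrow> complex^'m"
  assumes f: "\<And>x. f x = (\<Sum>l\<in>{- int M..int M - 1}. cis2pi (of_int l * x) *s c l)"
    and "0 < \<alpha>" and "\<alpha> < \<beta>" and "M < N" and large: "3 * pi\<^sup>2 \<le> (real N - real M) powr \<alpha>"
  shows "L2norm01 (\<lambda>x. f x - reconstr N (3 * pi / (real N - real M) powr \<alpha>)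
                                   ((real N - real M) powr \<beta> / (sqrt 6 * pi)) f x)
           \<le> 32 * real M * err_tilde N M \<alpha> \<beta> * L2norm01 f"
proof -
  define \<sigma> where "\<sigma> = (real N - real M) powr \<beta> / (sqrt 6 * pi)"
  define r where "r = 3 * pi / (real N - real M) powr \<alpha>"
  have "real N - real M \<ge> 1"
    using \<open>M < N\<close> by simp
  then have "\<sigma> > 0" "r > 0" "(real N - real M) powr \<alpha> > 0"
    by (auto simp: \<sigma>_def r_def)
  have "r \<le> 3 * pi / (3 * pi\<^sup>2)"
    unfolding r_def using large \<open>(real N - real M) powr \<alpha> > 0\<close>
    by (intro divide_left_mono) (auto simp: zero_less_mult_iff)
  also have "\<dots> \<le> 1 / 2"
    using pi_gt3 by (simp add: power2_eq_square field_simps)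
  finally have "r \<le> 1 / 2" .
  have coeffs: "(\<Sum>l\<in>{- int M..int M - 1}. norm (c l)) \<le> 2 * real M * L2norm01 f"
    using sum_mono[of "{- int M..int M - 1}" "\<lambda>l. norm (c l)" "\<lambda>_. L2norm01 f"]
          norm_coeff_le_L2norm01[OF f] by simp
  have pointwise: "norm (f x - reconstr N r \<sigma> f x) \<le> (2 * real M * L2norm01 f) * (16 * err_tilde N M \<alpha> \<beta>)" for x
  proof -
    have "norm (f x - reconstr N r \<sigma> f x) \<le> (\<Sum>l\<in>{- int M..int M - 1}. norm (c l)) * (16 * err_tilde N M \<alpha> \<beta>)"
      using reconstr_pointwise_error[OF f \<open>M < N\<close> \<open>\<sigma> > 0\<close> \<open>r > 0\<close> \<open>r \<le> 1 / 2\<close>, of x]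
        error_terms_le_err_tilde[OF assms(2-5)]
      unfolding \<sigma>_def r_def by (elim order_trans mult_left_mono) (simp add: sum_nonneg)
    also have "\<dots> \<le> (2 * real M * L2norm01 f) * (16 * err_tilde N M \<alpha> \<beta>)"
      using coeffs by (intro mult_right_mono) (simp_all add: err_tilde_nonneg)
    finally show ?thesis .
  qed
  have "L2norm01 (\<lambda>x. f x - reconstr N r \<sigma> f x) \<le> (2 * real M * L2norm01 f) * (16 * err_tilde N M \<alpha> \<beta>)"
    using pointwise by (intro L2norm01_le_sup) (auto intro!: mult_nonneg_nonneg L2norm01_nonneg err_tilde_nonneg)
  then show ?thesis
    by (simp add: \<sigma>_def r_def mult_ac)
qed

lemma eventually_powr_diff_ge:
  fixes \<alpha> C :: real
  assumes "\<alpha> > 0"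
  shows "\<forall>\<^sub>F N in sequentially. M < N \<and> C \<le> (real N - real M) powr \<alpha>"
proof -
  have "M < N \<and> C \<le> (real N - real M) powr \<alpha>" if N: "M + nat \<lceil>\<bar>C\<bar> powr (1 / \<alpha>)\<rceil> + 1 \<le> N" for N
  proof
    show "M < N" using N by simp
    have "\<bar>C\<bar> powr (1 / \<alpha>) \<le> real N - real M"
      using N real_nat_ceiling_ge[of "\<bar>C\<bar> powr (1 / \<alpha>)"] by linarith
    then have "(\<bar>C\<bar> powr (1 / \<alpha>)) powr \<alpha> \<le> (real N - real M) powr \<alpha>"
      using assms by (intro powr_mono2) auto
    then show "C \<le> (real N - real M) powr \<alpha>"
      using assms by (simp add: powr_powr)
  qed
  then show ?thesis
    unfolding eventually_sequentially by blast
qed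

theorem theorem3p1:
  fixes M :: nat and f :: "real \<Rightarrow> complex ^ 'm" and \<alpha> \<beta> :: real
  assumes "bandlimited M f"
    and "0 < \<alpha>" and "\<alpha> < \<beta>" and "\<beta> < 1"
  shows "\<exists>C>0. \<forall>\<^sub>F N in sequentially.
           M < N \<and>
           L2norm01 (\<lambda>x. f x - reconstr N (3 * pi / (real N - real M) powr \<alpha>)
                                   ((real N - real M) powr \<beta> / (sqrt 6 * pi)) f x)
             \<le> C * err_tilde N M \<alpha> \<beta> * L2norm01 f"
proof (intro exI conjI)
  obtain c :: "int \<Rightarrow> complex ^ 'm"
    where f: "\<And>x. f x = (\<Sum>l\<in>{- int M..int M - 1}. cis2pi (of_int l * x) *s c l)"
    using assms(1) unfolding bandlimited_def exp_eq_cis2pi by blast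
  have "32 * real M * err_tilde N M \<alpha> \<beta> * L2norm01 f \<le> (32 * real M + 1) * err_tilde N M \<alpha> \<beta> * L2norm01 f" for N
    by (intro mult_right_mono) (auto simp: err_tilde_nonneg L2norm01_nonneg)
  with eventually_powr_diff_ge[OF assms(2), of M "3 * pi\<^sup>2"] show "\<forall>\<^sub>F N in sequentially.
           M < N \<and>
           L2norm01 (\<lambda>x. f x - reconstr N (3 * pi / (real N - real M) powr \<alpha>)
                                   ((real N - real M) powr \<beta> / (sqrt 6 * pi)) f x)
             \<le> (32 * real M + 1) * err_tilde N M \<alpha> \<beta> * L2norm01 f"
    by (elim eventually_mono)
       (blast intro: order_trans[OF reconstr_error_le_err_tilde[OF f assms(2,3)]])
qed simp

end
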